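(* Assume $A_n$ satisfies (C1), the mean field condition $\lim_{n\to\infty}\frac1n\sum_{i,j=1}^nA_n(i,j)^2=0$, and the irregularity condition $$\liminf_{n\to\infty}\frac1n\sum_{i=1}^n\big(\mathcal R_n(i)-\overline{\mathcal R}_n\big)^2>0.$$ Then for every $(\beta,B)\in\Theta$, under $\mathbb P_{n,\beta,B}$ we have $T_n(\mathbf X)=\Theta_p(1)$. Consequently, with probability tending to one the pseudo-likelihood estimator exists and $(\hat\beta_n-\beta)^2+(\hat B_n-B)^2=O_p(1/n)$.
   Context: For each $n$, $A_n$ is a known symmetric $n\times n$ matrix with non-negative entries and zero diagonal. The Ising model is $\mathbb P_{n,\beta,B}(\mathbf X=\mathbf x)=Z_n(\beta,B)^{-1}\exp(\frac{\beta}{2}\mathbf x^\top A_n\mathbf x+B\sum_i x_i)$ on $\{-1,1\}^n$. (C1): there is a constant $\gamma<\infty$ with $\max_{i}\sum_{j}A_n(i,j)\le\gamma$ for all $n$. $\Theta=\{(\beta,B):\beta>0,B\ne0\}$. $\mathcal R_n(i)=\sum_{j=1}^nA_n(i,j)$ (row sums), $\overline{\mathcal R}_n=\frac1n\sum_i\mathcal R_n(i)$. $m_i(\mathbf x)=\sum_jA_n(i,j)x_j$, $\bar m(\mathbf x)=\frac1n\sum_i m_i(\mathbf x)$, $T_n(\mathbf x)=\frac1n\sum_i(m_i(\mathbf x)-\bar m(\mathbf x))^2$. The pseudo-likelihood estimator $(\hat\beta_n,\hat B_n)$ is the unique root in $\mathbb R^2$ of $\sum_i m_i(\mathbf x)(x_i-\tanh(\beta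 m_i(\mathbf x)+B))=0$, $\sum_i(x_i-\tanh(\beta m_i(\mathbf x)+B))=0$, when it exists. $U_n=O_p(V_n)$ means $U_n/V_n$ is tight; $U_n=\Theta_p(V_n)$ means $U_n=O_p(V_n)$ and $V_n=O_p(U_n)$. *)

theory Defs
  imports Complex_Main "HOL-Library.Extended_Real" "HOL-Library.Liminf_Limsup"
begin

text \<open>A sequence of matrices: A n i j is the (i,j) entry of A_n, for i, j < n
  (indices 0..n-1). Configurations in {-1,1}^n are functions nat => real that are
  +-1 on {0..<n} and 0 elsewhere.\<close>

type_synonym matseq = "nat \<Rightarrow> nat \<Rightarrow> nat \<Rightarrow> real"

definition configs :: "nat \<Rightarrow> (nat \<Rightarrow> real) set" where
  "configs n = {x. (\<forall>i<n. x i = 1 \<or> x i = -1) \<and> (\<forall>i\<ge>n. x i = 0)}"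

definition ising_weight :: "matseq \<Rightarrow> nat \<Rightarrow> real \<Rightarrow> real \<Rightarrow> (nat \<Rightarrow> real) \<Rightarrow> real" where
  "ising_weight A n \<beta> B x =
     exp (\<beta> / 2 * (\<Sum>i<n. \<Sum>j<n. x i * A n i j * x j) + B * (\<Sum>i<n. x i))"

definition ising_Z :: "matseq \<Rightarrow> nat \<Rightarrow> real \<Rightarrow> real \<Rightarrow> real" where
  "ising_Z A n \<beta> B = (\<Sum>x\<in>configs n. ising_weight A n \<beta> B x)"

definition ising_prob :: "matseq \<Rightarrow> nat \<Rightarrow> real \<Rightarrow> real \<Rightarrow> (nat \<Rightarrow> real) set \<Rightarrow> real" where
  "ising_prob A n \<beta> B E =
     (\<Sum>x\<in>configs n \<inter> E. ising_weight A n \<beta> B x) / ising_Z A n \<beta> B"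

definition row_sum :: "matseq \<Rightarrow> nat \<Rightarrow> nat \<Rightarrow> real" where
  "row_sum A n i = (\<Sum>j<n. A n i j)"

definition row_sum_mean :: "matseq \<Rightarrow> nat \<Rightarrow> real" where
  "row_sum_mean A n = (\<Sum>i<n. row_sum A n i) / real n"

definition loc_field :: "matseq \<Rightarrow> nat \<Rightarrow> (nat \<Rightarrow> real) \<Rightarrow> nat \<Rightarrow> real" where
  "loc_field A n x i = (\<Sum>j<n. A n i j * x j)"

definition loc_field_mean :: "matseq \<Rightarrow> nat \<Rightarrow> (nat \<Rightarrow> real) \<Rightarrow> real" where
  "loc_field_mean A n x = (\<Sum>i<n. loc_field A n x i) / real n"

definition T_stat :: "matseq \<Rightarrow> nat \<Rightarrow> (nat \<Rightarrow> real) \<Rightarrow> real" where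
  "T_stat A n x = (\<Sum>i<n. (loc_field A n x i - loc_field_mean A n x)^2) / real n"

definition Op :: "matseq \<Rightarrow> real \<Rightarrow> real \<Rightarrow> (nat \<Rightarrow> (nat \<Rightarrow> real) \<Rightarrow> real)
                    \<Rightarrow> (nat \<Rightarrow> (nat \<Rightarrow> real) \<Rightarrow> real) \<Rightarrow> bool" where
  "Op A \<beta> B U V \<longleftrightarrow> (\<forall>\<epsilon>>0. \<exists>M. eventually (\<lambda>n.
      ising_prob A n \<beta> B {x. \<bar>U n x\<bar> > M * \<bar>V n x\<bar>} \<le> \<epsilon>) sequentially)"

definition Thetap :: "matseq \<Rightarrow> real \<Rightarrow> real \<Rightarrow> (nat \<Rightarrow> (nat \<Rightarrow> real) \<Rightarrow> real)
                    \<Rightarrow> (nat \<Rightarrow> (nat \<Rightarrow> real) \<Rightarrow> real) \<Rightarrow> bool" where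
  "Thetap A \<beta> B U V \<longleftrightarrow> Op A \<beta> B U V \<and> Op A \<beta> B V U"

definition pl_root :: "matseq \<Rightarrow> nat \<Rightarrow> (nat \<Rightarrow> real) \<Rightarrow> real \<times> real \<Rightarrow> bool" where
  "pl_root A n x p \<longleftrightarrow>
     (\<Sum>i<n. loc_field A n x i * (x i - tanh (fst p * loc_field A n x i + snd p))) = 0 \<and>
     (\<Sum>i<n. x i - tanh (fst p * loc_field A n x i + snd p)) = 0"

definition ple_exists :: "matseq \<Rightarrow> nat \<Rightarrow> (nat \<Rightarrow> real) \<Rightarrow> bool" where
  "ple_exists A n x \<longleftrightarrow> (\<exists>!p. pl_root A n x p)"

definition ple :: "matseq \<Rightarrow> nat \<Rightarrow> (nat \<Rightarrow> real) \<Rightarrow> real \<times> real" where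
  "ple A n x = (THE p. pl_root A n x p)"

end

theory Submission
  imports Defs "HOL-Analysis.Analysis"
begin

text \<open>
  Flipping a single spin shows that the residuals \<open>x\<^sub>i - tanh (\<beta> m\<^sub>i + B)\<close> are conditionally
  centred, so sums of residuals with slowly varying weights have second moments of order \<open>n\<close>,
  and the smoothed residuals \<open>\<Sum>\<^sub>j A\<^sub>i\<^sub>j (x\<^sub>j - tanh (\<beta> m\<^sub>j + B))\<close> have total second moment
  \<open>O(\<Sum>\<^sub>i\<^sub>j A\<^sub>i\<^sub>j\<^sup>2) = o(n)\<close>. Hence, with high probability, the local fields are
  \<open>m\<^sub>i \<approx> t R\<^sub>i\<close>, where \<open>t = tanh (\<beta> c + B)\<close> for the mean field \<open>c\<close>, up to errors controlled by
  \<open>T\<^sub>n\<close>; averaging gives \<open>c \<approx> t Rb\<close> for the mean row sum \<open>Rb\<close>. Since \<open>B \<noteq> 0\<close>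
  keeps \<open>t\<close> away from 0, a small \<open>T\<^sub>n\<close> would make the row sums \<open>R\<^sub>i\<close> nearly constant,
  contradicting irregularity; so \<open>T\<^sub>n\<close> is bounded below with high probability, and it is
  bounded above by \<open>4 \<gamma>\<^sup>2\<close>.

  Once \<open>T\<^sub>n \<ge> \<delta>\<close>, the log pseudo-likelihood is strongly concave near the true parameter with
  curvature of order \<open>n\<close>, while its gradient there has second moment \<open>O(n)\<close>. Its maximum over a
  ball of radius \<open>O(n\<^sup>-\<^sup>1\<^sup>/\<^sup>2)\<close> then lies in the interior, giving a critical point, which is
  unique by strict concavity.
\<close>

section \<open>tanh and log cosh\<close>

lemma tanh_diff_MVT:
  fixes a b :: real
  assumes "a < b"
  shows "\<exists>z. a < z \<and> z < b \<and> tanh b - tanh a = (b - a) * (1 - tanh z ^ 2)"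
  using assms
  by (intro MVT2) (auto intro!: derivative_eq_intros simp: cosh_real_pos[THEN less_imp_neq, symmetric])

lemma tanh_sq_le_1: "tanh (z::real) ^ 2 \<le> 1"
  using tanh_real_bounds[of z] by (simp add: abs_square_le_1 abs_le_iff)

lemma abs_tanh_diff_le: "\<bar>tanh a - tanh b\<bar> \<le> \<bar>a - (b::real)\<bar>"
proof -
  have "\<bar>tanh b - tanh a\<bar> \<le> \<bar>b - a\<bar>" if ab: "a < b" for a b :: real
  proof -
    obtain z where "tanh b - tanh a = (b - a) * (1 - tanh z ^ 2)"
      using tanh_diff_MVT[OF ab] by blast
    then show ?thesis
      using ab tanh_sq_le_1[of z] by (simp add: abs_mult mult_left_le)
  qed
  then show ?thesis
    by (cases a b rule: linorder_cases) (auto simp: abs_minus_commute)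
qed

lemma tanh_diff_mult_diff_nonneg: "0 \<le> (tanh a - tanh b) * (a - (b::real))"
  by (cases a b rule: linorder_cases) (auto intro!: mult_nonneg_nonneg mult_nonpos_nonpos)

lemma tanh_diff_mult_diff_pos: "a \<noteq> b \<Longrightarrow> 0 < (tanh a - tanh b) * (a - (b::real))"
  by (cases a b rule: linorder_cases) (auto intro!: mult_pos_pos mult_neg_neg)

lemma tanh_diff_mult_diff_ge:
  fixes a b M :: real
  assumes "\<bar>a\<bar> \<le> M" "\<bar>b\<bar> \<le> M"
  shows "(1 - tanh M ^ 2) * (a - b) ^ 2 \<le> (tanh a - tanh b) * (a - b)"
proof -
  have *: "(1 - tanh M ^ 2) * (b - a) ^ 2 \<le> (tanh b - tanh a) * (b - a)"
    if ab: "a < b" and "\<bar>a\<bar> \<le> M" "\<bar>b\<bar> \<le> M" for a b :: real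
  proof -
    obtain z where z: "a < z" "z < b" "tanh b - tanh a = (b - a) * (1 - tanh z ^ 2)"
      using tanh_diff_MVT[OF ab] by blast
    have "\<bar>tanh z\<bar> \<le> tanh M"
      using z that tanh_real_le_iff[of "\<bar>z\<bar>" M] by simp
    then have "tanh z ^ 2 \<le> tanh M ^ 2"
      by (metis abs_ge_zero power2_abs power_mono)
    then have "(1 - tanh M ^ 2) * (b - a) ^ 2 \<le> (1 - tanh z ^ 2) * (b - a) ^ 2"
      by (intro mult_right_mono) auto
    then show ?thesis
      using z(3) by (simp add: power2_eq_square mult_ac)
  qed
  show ?thesis
  proof (cases a b rule: linorder_cases)
    case less
    have "(tanh b - tanh a) * (b - a) = (tanh a - tanh b) * (a - b)"
      by (simp add: algebra_simps)
    then show ?thesis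
      using *[of a b] assms less by (simp add: power2_commute)
  next
    case greater
    then show ?thesis
      using *[of b a] assms by simp
  qed simp
qed

lemma DERIV_ln_cosh_affine:
  "((\<lambda>s. ln (cosh (z + s * w))) has_real_derivative (tanh (z + s * w) * w)) (at (s::real))"
proof -
  have "DERIV (\<lambda>s. cosh (z + s * w)) s :> sinh (z + s * w) * w"
    by (rule has_field_derivative_cosh) (auto intro!: derivative_eq_intros)
  from DERIV_chain2[OF DERIV_ln_divide[OF cosh_real_pos] this] show ?thesis
    by (simp add: tanh_def)
qed

text \<open>Strong concavity of the log pseudo-likelihood comes from this second-order bound.\<close>

lemma ln_cosh_diff_ge:
  fixes z w M :: real
  assumes "\<bar>z\<bar> \<le> M" "\<bar>z + w\<bar> \<le> M"
  shows "tanh z * w + (1 - tanh M ^ 2) / 2 * w ^ 2 \<le> ln (cosh (z + w)) - ln (cosh z)"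
proof -
  define c where "c = 1 - tanh M ^ 2"
  define \<psi> where "\<psi> s = ln (cosh (z + s * w)) - (s * (w * tanh z) + s ^ 2 * (c / 2 * w ^ 2))" for s
  have der: "DERIV \<psi> s :> tanh (z + s * w) * w - w * tanh z - c * s * w ^ 2" for s
    unfolding \<psi>_def
    by (rule derivative_eq_intros DERIV_ln_cosh_affine refl | simp)+ (simp add: tanh_def algebra_simps)
  have "\<psi> 0 \<le> \<psi> 1"
  proof (rule DERIV_nonneg_imp_nondecreasing[of 0 1])
    fix s :: real assume s: "0 \<le> s" "s \<le> 1"
    have "\<bar>z + s * w\<bar> = \<bar>(1 - s) * z + s * (z + w)\<bar>"
      by (simp add: algebra_simps)
    also have "\<dots> \<le> (1 - s) * \<bar>z\<bar> + s * \<bar>z + w\<bar>"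
      using abs_triangle_ineq[of "(1 - s) * z" "s * (z + w)"] s by (simp add: abs_mult)
    also have "\<dots> \<le> (1 - s) * M + s * M"
      using s assms by (intro add_mono mult_left_mono) auto
    finally have zs: "\<bar>z + s * w\<bar> \<le> M"
      by (simp add: algebra_simps)
    have "s * (c * s * w ^ 2) \<le> s * ((tanh (z + s * w) - tanh z) * w)"
      using tanh_diff_mult_diff_ge[OF zs assms(1)] unfolding c_def
      by (simp add: power2_eq_square algebra_simps)
    then have "s = 0 \<or> c * s * w ^ 2 \<le> (tanh (z + s * w) - tanh z) * w"
      using s by (auto simp: mult_le_cancel_left)
    then have "0 \<le> tanh (z + s * w) * w - w * tanh z - c * s * w ^ 2"
      by (elim disjE) (simp_all add: algebra_simps)
    then show "\<exists>y. DERIV \<psi> s :> y \<and> 0 \<le> y"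
      using der by blast
  qed simp
  then show ?thesis
    unfolding \<psi>_def c_def by (simp add: algebra_simps)
qed

lemma tanh_flip_identity:
  fixes a u :: real
  assumes "a = 1 \<or> a = -1"
  shows "(a - tanh u) + exp (- (2 * a * u)) * (- a - tanh u) = 0"
proof -
  have "(1 - tanh v) + exp (-2 * v) * (-1 - tanh v) = 0" for v :: real
  proof -
    have "1 + exp (-2 * v) > 0"
      using exp_gt_zero[of "-2 * v"] by linarith
    then show ?thesis
      unfolding tanh_real_altdef by (simp add: field_simps)
  qed
  from this[of u] this[of "- u"] assms show ?thesis
    by (auto simp: algebra_simps)
qed

section \<open>The Ising measure\<close>

lemma finite_configs: "finite (configs n)"
proof -
  let ?f = "\<lambda>S i. if i < n then (if i \<in> S then 1 else -1) else (0::real)"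
  have "configs n \<subseteq> ?f ` Pow {..<n}"
  proof
    fix x assume x: "x \<in> configs n"
    then have "x = ?f {i. i < n \<and> x i = 1}"
      unfolding configs_def by (auto simp: fun_eq_iff)
    then show "x \<in> ?f ` Pow {..<n}" by blast
  qed
  then show ?thesis
    by (rule finite_subset) auto
qed

lemma configs_nonempty: "configs n \<noteq> {}"
proof -
  have "(\<lambda>i. if i < n then 1 else 0) \<in> configs n"
    unfolding configs_def by auto
  then show ?thesis by blast
qed

lemma spin_cases: "x \<in> configs n \<Longrightarrow> i < n \<Longrightarrow> x i = 1 \<or> x i = -1"
  unfolding configs_def by auto

lemma abs_spin: "x \<in> configs n \<Longrightarrow> i < n \<Longrightarrow> \<bar>x i\<bar> = 1"
  unfolding configs_def by auto

lemma abs_spin_minus_tanh_le: "x \<in> configs n \<Longrightarrow> j < n \<Longrightarrow> \<bar>x j - tanh u\<bar> \<le> 2"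
  using abs_spin[of x n j] tanh_real_bounds[of u] by auto

lemma ising_weight_pos: "ising_weight A n \<beta> B x > 0"
  unfolding ising_weight_def by simp

lemma ising_Z_pos: "ising_Z A n \<beta> B > 0"
  unfolding ising_Z_def using finite_configs configs_nonempty
  by (intro sum_pos) (auto simp: ising_weight_pos)

definition ising_expect :: "matseq \<Rightarrow> nat \<Rightarrow> real \<Rightarrow> real \<Rightarrow> ((nat \<Rightarrow> real) \<Rightarrow> real) \<Rightarrow> real" where
  "ising_expect A n \<beta> B g = (\<Sum>x\<in>configs n. ising_weight A n \<beta> B x * g x) / ising_Z A n \<beta> B"

lemma ising_prob_mono:
  "configs n \<inter> E \<subseteq> F \<Longrightarrow> ising_prob A n \<beta> B E \<le> ising_prob A n \<beta> B F"
  unfolding ising_prob_def using ising_Z_pos[of A n \<beta> B]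
  by (intro divide_right_mono sum_mono2) (auto simp: finite_configs ising_weight_pos less_imp_le)

lemma ising_prob_empty: "configs n \<inter> E = {} \<Longrightarrow> ising_prob A n \<beta> B E = 0"
  unfolding ising_prob_def by simp

lemma ising_prob_add_compl: "ising_prob A n \<beta> B E + ising_prob A n \<beta> B (- E) = 1"
proof -
  have "(\<Sum>x\<in>configs n \<inter> E. ising_weight A n \<beta> B x) + (\<Sum>x\<in>configs n \<inter> - E. ising_weight A n \<beta> B x)
        = ising_Z A n \<beta> B"
    unfolding ising_Z_def
    by (subst sum.union_disjoint[symmetric]) (auto simp: finite_configs intro: sum.cong)
  then show ?thesis
    unfolding ising_prob_def using ising_Z_pos[of A n \<beta> B] by (simp add: add_divide_distrib[symmetric])
qed

lemma ising_prob_le_1: "ising_prob A n \<beta> B E \<le> 1"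
proof -
  have "ising_prob A n \<beta> B (- E) \<ge> 0"
    unfolding ising_prob_def using ising_Z_pos ising_weight_pos
    by (intro divide_nonneg_pos sum_nonneg) (auto intro: less_imp_le)
  then show ?thesis
    using ising_prob_add_compl[of A n \<beta> B E] by linarith
qed

lemma ising_prob_Un_le:
  "ising_prob A n \<beta> B (E \<union> F) \<le> ising_prob A n \<beta> B E + ising_prob A n \<beta> B F"
proof -
  have "(\<Sum>x\<in>configs n \<inter> E \<union> configs n \<inter> F. ising_weight A n \<beta> B x) \<le>
        (\<Sum>x\<in>configs n \<inter> E. ising_weight A n \<beta> B x) + (\<Sum>x\<in>configs n \<inter> F. ising_weight A n \<beta> B x)"
    using sum_Un[of "configs n \<inter> E" "configs n \<inter> F" "ising_weight A n \<beta> B"]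
      sum_nonneg[of "configs n \<inter> E \<inter> (configs n \<inter> F)" "ising_weight A n \<beta> B"]
    by (simp add: finite_configs ising_weight_pos less_imp_le)
  moreover have "configs n \<inter> (E \<union> F) = configs n \<inter> E \<union> configs n \<inter> F"
    by auto
  ultimately show ?thesis
    unfolding ising_prob_def using ising_Z_pos[of A n \<beta> B]
    by (simp add: add_divide_distrib[symmetric] divide_right_mono)
qed

lemma ising_expect_sum:
  "ising_expect A n \<beta> B (\<lambda>x. \<Sum>j\<in>J. g j x) = (\<Sum>j\<in>J. ising_expect A n \<beta> B (g j))"
proof -
  have "(\<Sum>x\<in>configs n. ising_weight A n \<beta> B x * (\<Sum>j\<in>J. g j x)) =
        (\<Sum>j\<in>J. \<Sum>x\<in>configs n. ising_weight A n \<beta> B x * g j x)"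
    by (simp add: sum_distrib_left) (rule sum.swap)
  then show ?thesis
    unfolding ising_expect_def by (simp add: sum_divide_distrib)
qed

lemma ising_expect_add:
  "ising_expect A n \<beta> B (\<lambda>x. g x + h x) = ising_expect A n \<beta> B g + ising_expect A n \<beta> B h"
  unfolding ising_expect_def by (simp add: distrib_left sum.distrib add_divide_distrib)

lemma ising_expect_cmult: "ising_expect A n \<beta> B (\<lambda>x. c * g x) = c * ising_expect A n \<beta> B g"
  unfolding ising_expect_def by (simp add: sum_distrib_left algebra_simps)

lemma ising_expect_const: "ising_expect A n \<beta> B (\<lambda>x. c) = c"
  unfolding ising_expect_def using ising_Z_pos[of A n \<beta> B]
  by (simp add: ising_Z_def sum_distrib_right[symmetric])

lemma ising_expect_cong:
  "(\<And>x. x \<in> configs n \<Longrightarrow> g x = h x) \<Longrightarrow> ising_expect A n \<beta> B g = ising_expect A n \<beta> B h"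
  unfolding ising_expect_def by (auto intro!: sum.cong)

lemma ising_expect_mono:
  "(\<And>x. x \<in> configs n \<Longrightarrow> g x \<le> h x) \<Longrightarrow> ising_expect A n \<beta> B g \<le> ising_expect A n \<beta> B h"
  unfolding ising_expect_def using ising_Z_pos[of A n \<beta> B]
  by (intro divide_right_mono sum_mono mult_left_mono) (auto simp: ising_weight_pos less_imp_le)

lemma ising_expect_abs_le:
  assumes "\<And>x. x \<in> configs n \<Longrightarrow> \<bar>g x\<bar> \<le> h x"
  shows "\<bar>ising_expect A n \<beta> B g\<bar> \<le> ising_expect A n \<beta> B h"
proof -
  have "ising_expect A n \<beta> B g \<le> ising_expect A n \<beta> B h"
    using assms by (intro ising_expect_mono) (metis abs_le_D1)
  moreover have "ising_expect A n \<beta> B (\<lambda>x. - 1 * g x) \<le> ising_expect A n \<beta> B h"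
    using assms by (intro ising_expect_mono) (metis abs_le_D2 mult_minus1)
  ultimately show ?thesis
    unfolding ising_expect_cmult by linarith
qed

lemma ising_prob_ge_le_expect:
  assumes "\<And>x. x \<in> configs n \<Longrightarrow> 0 \<le> g x" "a > 0"
  shows "ising_prob A n \<beta> B {x. a \<le> g x} \<le> ising_expect A n \<beta> B g / a"
proof -
  have "(\<Sum>x\<in>configs n \<inter> {x. a \<le> g x}. ising_weight A n \<beta> B x) \<le>
        (\<Sum>x\<in>configs n \<inter> {x. a \<le> g x}. ising_weight A n \<beta> B x * (g x / a))"
    using assms ising_weight_pos[of A n \<beta> B] by (intro sum_mono) (auto simp: field_simps)
  also have "\<dots> \<le> (\<Sum>x\<in>configs n. ising_weight A n \<beta> B x * (g x / a))"
    using assms finite_configs[of n]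
    by (intro sum_mono2) (auto intro!: mult_nonneg_nonneg divide_nonneg_pos less_imp_le[OF ising_weight_pos])
  finally show ?thesis
    unfolding ising_prob_def ising_expect_def using ising_Z_pos[of A n \<beta> B]
    by (simp add: divide_right_mono sum_divide_distrib[symmetric] sum_distrib_left[symmetric] field_simps)
qed

section \<open>Single spin flips\<close>

definition flip :: "nat \<Rightarrow> (nat \<Rightarrow> real) \<Rightarrow> (nat \<Rightarrow> real)" where
  "flip i x = x(i := - x i)"

lemma flip_configs: "i < n \<Longrightarrow> x \<in> configs n \<Longrightarrow> flip i x \<in> configs n"
  unfolding configs_def flip_def by auto

lemma flip_flip [simp]: "flip i (flip i x) = x"
  unfolding flip_def by auto

lemma flip_other [simp]: "k \<noteq> i \<Longrightarrow> flip i x k = x k"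
  unfolding flip_def by auto

lemma flip_same [simp]: "flip i x i = - x i"
  unfolding flip_def by auto

lemma quad_form_fun_upd:
  fixes x :: "nat \<Rightarrow> real" and M :: "nat \<Rightarrow> nat \<Rightarrow> real"
  assumes i: "i < n"
  shows "(\<Sum>j<n. \<Sum>k<n. (x(i := v)) j * M j k * (x(i := v)) k) =
         (\<Sum>j<n. \<Sum>k<n. x j * M j k * x k) + (v - x i) * (\<Sum>k<n. M i k * x k)
         + (v - x i) * (\<Sum>j<n. x j * M j i) + (v - x i)^2 * M i i"
proof -
  define d where "d = v - x i"
  have sum_if_const: "(\<Sum>k\<in>K. if P then f k else 0) = (if P then sum f K else 0)"
    for K P and f :: "nat \<Rightarrow> real"
    by simp
  have upd: "(x(i := v)) j = x j + (if j = i then d else 0)" for j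
    by (simp add: d_def)
  have "(\<Sum>j<n. \<Sum>k<n. (x(i := v)) j * M j k * (x(i := v)) k) =
        (\<Sum>j<n. \<Sum>k<n. x j * M j k * x k + x j * M j k * (if k = i then d else 0)
            + (if j = i then d else 0) * M j k * x k
            + (if j = i then d else 0) * M j k * (if k = i then d else 0))"
    unfolding upd by (intro sum.cong refl) (simp add: algebra_simps)
  also have "\<dots> = (\<Sum>j<n. \<Sum>k<n. x j * M j k * x k) + (\<Sum>j<n. x j * M j i * d)
        + (\<Sum>k<n. d * M i k * x k) + d * M i i * d"
    using i by (simp add: sum.distrib sum_if_const if_distrib[where f="\<lambda>t. _ * t"] if_distrib[where f="\<lambda>t. t * _"]
        cong: if_cong)
  finally show ?thesis
    by (simp add: d_def sum_distrib_left sum_distrib_right power2_eq_square algebra_simps)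
qed

lemma loc_field_fun_upd:
  assumes "i < n"
  shows "loc_field A n (x(i := v)) k = loc_field A n x k + A n k i * (v - x i)"
proof -
  have "loc_field A n (x(i := v)) k = (\<Sum>j<n. A n k j * x j + (if j = i then A n k i * (v - x i) else 0))"
    unfolding loc_field_def by (intro sum.cong) (auto simp: algebra_simps)
  then show ?thesis
    using assms by (simp add: sum.distrib loc_field_def)
qed

lemma loc_field_flip: "i < n \<Longrightarrow> loc_field A n (flip i x) k = loc_field A n x k - 2 * A n k i * x i"
  unfolding flip_def by (simp add: loc_field_fun_upd)

lemma ising_weight_flip:
  assumes symm: "\<And>j k. j < n \<Longrightarrow> k < n \<Longrightarrow> A n j k = A n k j"
    and diag: "A n i i = 0" and i: "i < n"
  shows "ising_weight A n \<beta> B (flip i x) =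
         ising_weight A n \<beta> B x * exp (- (2 * x i * (\<beta> * loc_field A n x i + B)))"
proof -
  have "(\<Sum>j<n. x j * A n j i) = loc_field A n x i"
    unfolding loc_field_def using symm i by (intro sum.cong) auto
  then have quad: "(\<Sum>j<n. \<Sum>k<n. flip i x j * A n j k * flip i x k) =
        (\<Sum>j<n. \<Sum>k<n. x j * A n j k * x k) - 4 * x i * loc_field A n x i"
    unfolding flip_def using quad_form_fun_upd[OF i, where x=x and M="A n" and v="- x i"] diag
    by (simp add: loc_field_def algebra_simps)
  have "(\<Sum>k<n. flip i x k) = (\<Sum>k<n. x k + (if k = i then - 2 * x i else 0))"
    by (intro sum.cong) (auto simp: flip_def)
  then have lin: "(\<Sum>k<n. flip i x k) = (\<Sum>k<n. x k) - 2 * x i"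
    using i by (simp add: sum.distrib)
  show ?thesis
    unfolding ising_weight_def quad lin by (simp add: exp_add[symmetric] algebra_simps)
qed

text \<open>The conditional law of \<open>x\<^sub>i\<close> given the other spins has mean \<open>tanh (\<beta> m\<^sub>i + B)\<close>, so the
  residual \<open>x\<^sub>i - tanh (\<beta> m\<^sub>i + B)\<close> is orthogonal to every function not depending on \<open>x\<^sub>i\<close>.
  Pairing each configuration with its flip at \<open>i\<close> makes this explicit.\<close>

lemma ising_expect_residual_orthogonal:
  assumes symm: "\<And>j k. j < n \<Longrightarrow> k < n \<Longrightarrow> A n j k = A n k j"
    and diag: "A n i i = 0" and i: "i < n"
    and inv: "\<And>x. x \<in> configs n \<Longrightarrow> \<phi> (flip i x) = \<phi> x"
  shows "ising_expect A n \<beta> B (\<lambda>x. (x i - tanh (\<beta> * loc_field A n x i + B)) * \<phi> x) = 0"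
proof -
  define h where "h x = ising_weight A n \<beta> B x * ((x i - tanh (\<beta> * loc_field A n x i + B)) * \<phi> x)" for x
  have "bij_betw (flip i) (configs n) (configs n)"
    by (rule bij_betw_byWitness[where f'="flip i"]) (auto simp: flip_configs[OF i])
  then have reindex: "(\<Sum>x\<in>configs n. h (flip i x)) = (\<Sum>x\<in>configs n. h x)"
    by (rule sum.reindex_bij_betw)
  have pair: "h x + h (flip i x) = 0" if x: "x \<in> configs n" for x
  proof -
    define u where "u = \<beta> * loc_field A n x i + B"
    have "loc_field A n (flip i x) i = loc_field A n x i"
      using diag by (simp add: loc_field_flip[OF i])
    then have "h (flip i x) = ising_weight A n \<beta> B x * exp (- (2 * x i * u)) * ((- x i - tanh u) * \<phi> x)"
      unfolding h_def u_def using ising_weight_flip[where A=A and n=n, OF symm diag i] inv[OF x] by simp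
    then have "h x + h (flip i x) =
        ising_weight A n \<beta> B x * \<phi> x * ((x i - tanh u) + exp (- (2 * x i * u)) * (- x i - tanh u))"
      unfolding h_def u_def by (simp add: algebra_simps)
    then show ?thesis
      using tanh_flip_identity[OF spin_cases[OF x i]] by simp
  qed
  have "2 * (\<Sum>x\<in>configs n. h x) = (\<Sum>x\<in>configs n. h x + h (flip i x))"
    by (simp add: sum.distrib reindex)
  also have "\<dots> = 0"
    using pair by simp
  finally show ?thesis
    unfolding ising_expect_def h_def by simp
qed

section \<open>Second moments of residual sums\<close>

text \<open>Weighted residuals \<open>c\<^sub>j(x) (x\<^sub>j - tanh (\<beta> m\<^sub>j + B))\<close> with weights not depending on \<open>x\<^sub>j\<close> and
  changing by \<open>O(A\<^sub>k\<^sub>j)\<close> when spin \<open>j\<close> is flipped; their covariances are then \<open>O(A\<^sub>k\<^sub>j)\<close>.\<close>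

locale residual_weights =
  fixes A :: matseq and n :: nat and \<beta> B :: real and c :: "nat \<Rightarrow> (nat \<Rightarrow> real) \<Rightarrow> real"
    and K L :: real
  assumes symm: "\<And>j k. j < n \<Longrightarrow> k < n \<Longrightarrow> A n j k = A n k j"
    and diag: "\<And>j. j < n \<Longrightarrow> A n j j = 0"
    and nonneg: "\<And>j k. j < n \<Longrightarrow> k < n \<Longrightarrow> A n j k \<ge> 0"
    and c_flip: "\<And>j x. j < n \<Longrightarrow> x \<in> configs n \<Longrightarrow> c j (flip j x) = c j x"
    and c_bound: "\<And>j x. j < n \<Longrightarrow> x \<in> configs n \<Longrightarrow> \<bar>c j x\<bar> \<le> K"
    and c_lipschitz: "\<And>j k x. j < n \<Longrightarrow> k < n \<Longrightarrow> j \<noteq> k \<Longrightarrow> x \<in> configs n \<Longrightarrow>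
                  \<bar>c k (flip j x) - c k x\<bar> \<le> L * A n k j"
begin

definition resid :: "nat \<Rightarrow> (nat \<Rightarrow> real) \<Rightarrow> real" where
  "resid j x = c j x * (x j - tanh (\<beta> * loc_field A n x j + B))"

lemma abs_resid_le:
  assumes "j < n" "x \<in> configs n"
  shows "\<bar>resid j x\<bar> \<le> 2 * K"
proof -
  have "\<bar>c j x\<bar> * \<bar>x j - tanh (\<beta> * loc_field A n x j + B)\<bar> \<le> K * 2"
    using c_bound[OF assms] abs_spin_minus_tanh_le[OF assms(2,1)] by (intro mult_mono) auto
  then show ?thesis
    unfolding resid_def abs_mult by simp
qed

lemma abs_resid_flip_diff_le:
  assumes j: "j < n" and k: "k < n" and jk: "j \<noteq> k" and x: "x \<in> configs n"
  shows "\<bar>resid k (flip j x) - resid k x\<bar> \<le> 2 * (L + \<bar>\<beta>\<bar> * K) * A n k j"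
proof -
  define t where "t y = tanh (\<beta> * loc_field A n y k + B)" for y
  have "resid k (flip j x) - resid k x =
      (c k (flip j x) - c k x) * (x k - t (flip j x)) + c k x * (t x - t (flip j x))"
    unfolding resid_def t_def using jk by (simp add: algebra_simps)
  moreover have "\<bar>(c k (flip j x) - c k x) * (x k - t (flip j x))\<bar> \<le> L * A n k j * 2"
    unfolding abs_mult t_def using c_lipschitz[OF j k jk x] abs_spin_minus_tanh_le[OF x k]
    by (intro mult_mono) auto
  moreover have "\<bar>c k x * (t x - t (flip j x))\<bar> \<le> K * (\<bar>\<beta>\<bar> * (2 * A n k j))"
  proof -
    have "\<bar>t x - t (flip j x)\<bar> \<le> \<bar>\<beta> * loc_field A n x k - \<beta> * loc_field A n (flip j x) k\<bar>"
      unfolding t_def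
      using abs_tanh_diff_le[of "\<beta> * loc_field A n x k + B" "\<beta> * loc_field A n (flip j x) k + B"]
      by simp
    also have "\<dots> = \<bar>\<beta> * (2 * A n k j) * x j\<bar>"
      by (simp add: loc_field_flip[OF j] algebra_simps)
    also have "\<dots> = \<bar>\<beta>\<bar> * (2 * A n k j)"
      using abs_spin[OF x j] nonneg[OF k j] by (simp add: abs_mult)
    finally show ?thesis
      unfolding abs_mult using c_bound[OF k x] by (intro mult_mono) auto
  qed
  moreover have "2 * (L + \<bar>\<beta>\<bar> * K) * A n k j = L * A n k j * 2 + K * (\<bar>\<beta>\<bar> * (2 * A n k j))"
    by (simp add: algebra_simps)
  ultimately show ?thesis
    using abs_triangle_ineq[of "(c k (flip j x) - c k x) * (x k - t (flip j x))" "c k x * (t x - t (flip j x))"]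
    by linarith
qed

lemma ising_expect_resid_mult_le:
  assumes j: "j < n" and k: "k < n" and jk: "j \<noteq> k"
  shows "\<bar>ising_expect A n \<beta> B (\<lambda>x. resid j x * resid k x)\<bar> \<le> 2 * K * (L + \<bar>\<beta>\<bar> * K) * A n k j"
proof -
  define g where "g x = (resid k x + resid k (flip j x)) / 2" for x
  \<comment> \<open>\<open>g\<close> does not depend on \<open>x\<^sub>j\<close>, hence is orthogonal to \<open>resid j\<close>, and \<open>resid k - g\<close> is \<open>O(A\<^sub>k\<^sub>j)\<close>\<close>
  have "g (flip j x) = g x" for x
    unfolding g_def by simp
  then have weight_flip: "c j (flip j x) * g (flip j x) = c j x * g x" if "x \<in> configs n" for x
    using c_flip[OF j that] by simp
  have "ising_expect A n \<beta> B (\<lambda>x. resid j x * g x) =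
      ising_expect A n \<beta> B (\<lambda>x. (x j - tanh (\<beta> * loc_field A n x j + B)) * (c j x * g x))"
    by (rule ising_expect_cong) (simp add: resid_def algebra_simps)
  also have "\<dots> = 0"
    by (rule ising_expect_residual_orthogonal[where A=A and n=n and \<phi>="\<lambda>x. c j x * g x",
          OF symm diag[OF j] j weight_flip])
  finally have orth: "ising_expect A n \<beta> B (\<lambda>x. resid j x * g x) = 0" .
  have "ising_expect A n \<beta> B (\<lambda>x. resid j x * resid k x) =
      ising_expect A n \<beta> B (\<lambda>x. resid j x * (resid k x - g x) + resid j x * g x)"
    by (simp add: algebra_simps)
  also have "\<dots> = ising_expect A n \<beta> B (\<lambda>x. resid j x * (resid k x - g x))"
    by (simp add: ising_expect_add orth)
  finally have split: "ising_expect A n \<beta> B (\<lambda>x. resid j x * resid k x) =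
      ising_expect A n \<beta> B (\<lambda>x. resid j x * (resid k x - g x))" .
  have "\<bar>ising_expect A n \<beta> B (\<lambda>x. resid j x * (resid k x - g x))\<bar> \<le> ising_expect A n \<beta> B (\<lambda>x. 2 * K * (L + \<bar>\<beta>\<bar> * K) * A n k j)"
  proof (rule ising_expect_abs_le)
    fix x assume x: "x \<in> configs n"
    have "resid k x - g x = - ((resid k (flip j x) - resid k x) / 2)"
      unfolding g_def by (simp add: field_simps)
    then have "\<bar>resid k x - g x\<bar> = \<bar>resid k (flip j x) - resid k x\<bar> / 2"
      by simp
    also have "\<dots> \<le> (L + \<bar>\<beta>\<bar> * K) * A n k j"
      using abs_resid_flip_diff_le[OF j k jk x] by (simp add: algebra_simps)
    finally have "\<bar>resid k x - g x\<bar> \<le> (L + \<bar>\<beta>\<bar> * K) * A n k j" .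
    moreover have "\<bar>resid j x\<bar> \<le> 2 * K"
      using abs_resid_le[OF j x] .
    moreover have "0 \<le> 2 * K"
      using abs_resid_le[OF j x] abs_ge_zero[of "resid j x"] by linarith
    ultimately have "\<bar>resid j x\<bar> * \<bar>resid k x - g x\<bar> \<le> (2 * K) * ((L + \<bar>\<beta>\<bar> * K) * A n k j)"
      by (intro mult_mono) simp_all
    then have "\<bar>resid j x * (resid k x - g x)\<bar> \<le> (2 * K) * ((L + \<bar>\<beta>\<bar> * K) * A n k j)"
      by (simp only: abs_mult)
    then show "\<bar>resid j x * (resid k x - g x)\<bar> \<le> 2 * K * (L + \<bar>\<beta>\<bar> * K) * A n k j"
      by (simp only: mult.assoc)
  qed
  then show ?thesis
    unfolding split ising_expect_const .
qed

lemma ising_expect_resid_sq_le: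
  assumes "j < n"
  shows "ising_expect A n \<beta> B (\<lambda>x. resid j x * resid j x) \<le> 4 * K ^ 2"
proof -
  have "ising_expect A n \<beta> B (\<lambda>x. resid j x * resid j x) \<le> ising_expect A n \<beta> B (\<lambda>x. (2 * K) ^ 2)"
  proof (rule ising_expect_mono)
    fix x assume "x \<in> configs n"
    then have "\<bar>resid j x\<bar> ^ 2 \<le> (2 * K) ^ 2"
      using abs_resid_le[OF assms] by (intro power_mono) auto
    then show "resid j x * resid j x \<le> (2 * K) ^ 2"
      by (simp add: power2_eq_square)
  qed
  then show ?thesis
    by (simp add: ising_expect_const power_mult_distrib)
qed

lemma ising_expect_resid_pair_le:
  assumes j: "j < n" and k: "k < n"
  shows "a j * a k * ising_expect A n \<beta> B (\<lambda>x. resid j x * resid k x)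
    \<le> (if j = k then 4 * K ^ 2 * (a j) ^ 2 else 0) + 2 * K * (L + \<bar>\<beta>\<bar> * K) * (\<bar>a j\<bar> * \<bar>a k\<bar> * A n k j)"
proof (cases "j = k")
  case True
  have "a j * a j * ising_expect A n \<beta> B (\<lambda>x. resid j x * resid j x) \<le> a j * a j * (4 * K ^ 2)"
    using ising_expect_resid_sq_le[OF j] by (intro mult_left_mono) auto
  then have "a j * a j * ising_expect A n \<beta> B (\<lambda>x. resid j x * resid j x) \<le> 4 * K ^ 2 * (a j) ^ 2"
    by (simp add: power2_eq_square mult_ac)
  then show ?thesis
    using True j diag[of j] by simp
next
  case False
  have "a j * a k * ising_expect A n \<beta> B (\<lambda>x. resid j x * resid k x)
      \<le> \<bar>a j * a k\<bar> * \<bar>ising_expect A n \<beta> B (\<lambda>x. resid j x * resid k x)\<bar>"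
    by (metis abs_ge_self abs_mult)
  also have "\<dots> \<le> \<bar>a j * a k\<bar> * (2 * K * (L + \<bar>\<beta>\<bar> * K) * A n k j)"
    using ising_expect_resid_mult_le[OF j k False] by (intro mult_left_mono) auto
  finally show ?thesis
    using False by (simp add: abs_mult algebra_simps)
qed

lemma ising_expect_sum_resid_sq_le:
  "ising_expect A n \<beta> B (\<lambda>x. (\<Sum>j<n. a j * resid j x) ^ 2) \<le>
     4 * K ^ 2 * (\<Sum>j<n. (a j) ^ 2) + 2 * K * (L + \<bar>\<beta>\<bar> * K) * (\<Sum>j<n. \<Sum>k<n. \<bar>a j\<bar> * \<bar>a k\<bar> * A n k j)"
proof -
  define C where "C = 2 * K * (L + \<bar>\<beta>\<bar> * K)"
  have "ising_expect A n \<beta> B (\<lambda>x. (\<Sum>j<n. a j * resid j x) ^ 2) =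
      ising_expect A n \<beta> B (\<lambda>x. \<Sum>j<n. \<Sum>k<n. a j * a k * (resid j x * resid k x))"
  proof (rule ising_expect_cong)
    fix x
    show "(\<Sum>j<n. a j * resid j x) ^ 2 = (\<Sum>j<n. \<Sum>k<n. a j * a k * (resid j x * resid k x))"
      unfolding power2_eq_square sum_product by (intro sum.cong refl) (simp add: mult_ac)
  qed
  also have "\<dots> = (\<Sum>j<n. \<Sum>k<n. a j * a k * ising_expect A n \<beta> B (\<lambda>x. resid j x * resid k x))"
    by (simp add: ising_expect_sum ising_expect_cmult)
  also have "\<dots> \<le> (\<Sum>j<n. \<Sum>k<n. (if j = k then 4 * K ^ 2 * (a j) ^ 2 else 0) + C * (\<bar>a j\<bar> * \<bar>a k\<bar> * A n k j))"
    unfolding C_def by (intro sum_mono ising_expect_resid_pair_le) auto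
  also have "\<dots> = 4 * K ^ 2 * (\<Sum>j<n. (a j) ^ 2) + C * (\<Sum>j<n. \<Sum>k<n. \<bar>a j\<bar> * \<bar>a k\<bar> * A n k j)"
  proof -
    have "(\<Sum>j<n. \<Sum>k<n. if j = k then 4 * K ^ 2 * (a j) ^ 2 else 0) = 4 * K ^ 2 * (\<Sum>j<n. (a j) ^ 2)"
      by (simp add: sum_distrib_left)
    then show ?thesis
      by (simp only: sum.distrib sum_distrib_left)
  qed
  finally show ?thesis
    unfolding C_def .
qed

end

locale ising_interaction =
  fixes A :: matseq and n :: nat and \<beta> B \<gamma> :: real
  assumes symm: "\<And>j k. j < n \<Longrightarrow> k < n \<Longrightarrow> A n j k = A n k j"
    and diag: "\<And>j. j < n \<Longrightarrow> A n j j = 0"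
    and nonneg: "\<And>j k. j < n \<Longrightarrow> k < n \<Longrightarrow> A n j k \<ge> 0"
    and row_sum_le: "\<And>i. i < n \<Longrightarrow> row_sum A n i \<le> \<gamma>"
    and gamma_nonneg: "\<gamma> \<ge> 0"
begin

lemma row_sum_nonneg: "i < n \<Longrightarrow> row_sum A n i \<ge> 0"
  unfolding row_sum_def using nonneg by (intro sum_nonneg) auto

lemma col_sum_eq_row_sum: "k < n \<Longrightarrow> (\<Sum>j<n. A n j k) = row_sum A n k"
  unfolding row_sum_def using symm by (intro sum.cong) auto

lemma abs_loc_field_le: "x \<in> configs n \<Longrightarrow> i < n \<Longrightarrow> \<bar>loc_field A n x i\<bar> \<le> \<gamma>"
proof -
  assume x: "x \<in> configs n" and i: "i < n"
  have "\<bar>loc_field A n x i\<bar> \<le> (\<Sum>j<n. \<bar>A n i j * x j\<bar>)"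
    unfolding loc_field_def by (rule sum_abs)
  also have "\<dots> = row_sum A n i"
    unfolding row_sum_def using nonneg[OF i] abs_spin[OF x] by (intro sum.cong) (auto simp: abs_mult)
  finally show ?thesis
    using row_sum_le[OF i] by linarith
qed

lemma abs_loc_field_mean_le:
  assumes "x \<in> configs n"
  shows "\<bar>loc_field_mean A n x\<bar> \<le> \<gamma>"
proof -
  have "\<bar>\<Sum>i<n. loc_field A n x i\<bar> \<le> (\<Sum>i<n. \<bar>loc_field A n x i\<bar>)"
    by (rule sum_abs)
  also have "\<dots> \<le> (\<Sum>i<n. \<gamma>)"
    using abs_loc_field_le[OF assms] by (intro sum_mono) auto
  finally have "\<bar>\<Sum>i<n. loc_field A n x i\<bar> \<le> real n * \<gamma>"
    by simp
  then show ?thesis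
    unfolding loc_field_mean_def using gamma_nonneg
    by (cases "n = 0") (simp_all add: divide_le_eq mult.commute)
qed

lemma sum_abs_bilinear_le:
  assumes "\<And>j. j < n \<Longrightarrow> \<bar>a j\<bar> \<le> W"
  shows "(\<Sum>j<n. \<Sum>k<n. \<bar>a j\<bar> * \<bar>a k\<bar> * A n k j) \<le> W ^ 2 * (real n * \<gamma>)"
proof (cases "n = 0")
  case False
  then have W: "W \<ge> 0"
    using assms[of 0] by auto
  have "(\<Sum>j<n. \<Sum>k<n. \<bar>a j\<bar> * \<bar>a k\<bar> * A n k j) \<le> (\<Sum>j<n. \<Sum>k<n. W * W * A n k j)"
    using assms nonneg W by (intro sum_mono mult_right_mono mult_mono) auto
  also have "\<dots> = W ^ 2 * (\<Sum>j<n. row_sum A n j)"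
    unfolding power2_eq_square sum_distrib_left
    by (intro sum.cong refl) (simp add: sum_distrib_left[symmetric] col_sum_eq_row_sum)
  also have "\<dots> \<le> W ^ 2 * (\<Sum>j<n. \<gamma>)"
    using row_sum_le by (intro mult_left_mono sum_mono) auto
  finally show ?thesis
    by simp
qed simp

lemma sum_triangles_le:
  "(\<Sum>i<n. \<Sum>j<n. \<Sum>k<n. A n i j * A n i k * A n k j) \<le> \<gamma> * (\<Sum>i<n. \<Sum>j<n. (A n i j)^2)"
proof -
  have amgm: "(\<Sum>i<n. \<Sum>j<n. \<Sum>k<n. A n i j * A n i k * A n k j) \<le>
        (\<Sum>i<n. \<Sum>j<n. \<Sum>k<n. (A n i j)^2 / 2 * A n k j) + (\<Sum>i<n. \<Sum>j<n. \<Sum>k<n. (A n i k)^2 / 2 * A n k j)"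
    unfolding sum.distrib[symmetric]
  proof (intro sum_mono)
    fix i j k assume "i \<in> {..<n}" "j \<in> {..<n}" "k \<in> {..<n}"
    moreover have "A n i j * A n i k \<le> (A n i j)^2 / 2 + (A n i k)^2 / 2"
      using sum_squares_bound[of "A n i j" "A n i k"] by (simp add: power2_eq_square)
    ultimately show "A n i j * A n i k * A n k j \<le> (A n i j)^2 / 2 * A n k j + (A n i k)^2 / 2 * A n k j"
      using nonneg by (metis distrib_right lessThan_iff mult_right_mono)
  qed
  have cols: "(\<Sum>i<n. \<Sum>j<n. \<Sum>k<n. (A n i j)^2 / 2 * A n k j) \<le> (\<Sum>i<n. \<Sum>j<n. (A n i j)^2 / 2 * \<gamma>)"
    unfolding sum_distrib_left[symmetric]
    using col_sum_eq_row_sum row_sum_le by (intro sum_mono mult_left_mono) auto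
  have rows: "(\<Sum>i<n. \<Sum>j<n. \<Sum>k<n. (A n i k)^2 / 2 * A n k j) \<le> (\<Sum>i<n. \<Sum>k<n. (A n i k)^2 / 2 * \<gamma>)"
    unfolding sum.swap[where A="{..<n}" and B="{..<n}" and g="\<lambda>j k. (A n _ k)^2 / 2 * A n k j"]
  proof (intro sum_mono)
    fix i k assume "i \<in> {..<n}" "k \<in> {..<n}"
    then show "(\<Sum>j<n. (A n i k)^2 / 2 * A n k j) \<le> (A n i k)^2 / 2 * \<gamma>"
      using row_sum_le unfolding row_sum_def sum_distrib_left[symmetric] by (intro mult_left_mono) auto
  qed
  have "(\<Sum>i<n. \<Sum>j<n. (A n i j)^2 / 2 * \<gamma>) + (\<Sum>i<n. \<Sum>k<n. (A n i k)^2 / 2 * \<gamma>)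
      = \<gamma> * (\<Sum>i<n. \<Sum>j<n. (A n i j)^2)"
    by (simp add: sum_distrib_left algebra_simps)
  then show ?thesis
    using amgm cols rows by linarith
qed

lemma expect_sum_residual_sq_le:
  "ising_expect A n \<beta> B (\<lambda>x. (\<Sum>j<n. x j - tanh (\<beta> * loc_field A n x j + B))^2)
     \<le> (4 + 2 * \<bar>\<beta>\<bar> * \<gamma>) * real n"
proof -
  interpret unit: residual_weights A n \<beta> B "\<lambda>j x. 1" 1 0
    by unfold_locales (auto simp: symm diag nonneg)
  have "ising_expect A n \<beta> B (\<lambda>x. (\<Sum>j<n. 1 * unit.resid j x)^2) \<le>
     4 * 1 ^ 2 * (\<Sum>j<n. 1 ^ 2) + 2 * 1 * (0 + \<bar>\<beta>\<bar> * 1) * (\<Sum>j<n. \<Sum>k<n. \<bar>1\<bar> * \<bar>1\<bar> * A n k j)"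
    by (rule unit.ising_expect_sum_resid_sq_le)
  also have "\<dots> \<le> 4 * real n + 2 * \<bar>\<beta>\<bar> * (1 ^ 2 * (real n * \<gamma>))"
    using sum_abs_bilinear_le[of "\<lambda>j. 1" 1] by (simp add: mult_left_mono)
  finally show ?thesis
    unfolding unit.resid_def by (simp add: algebra_simps)
qed

lemma expect_row_sum_residual_sq_le:
  "ising_expect A n \<beta> B (\<lambda>x. (\<Sum>j<n. row_sum A n j * (x j - tanh (\<beta> * loc_field A n x j + B)))^2)
     \<le> (4 * \<gamma>^2 + 2 * \<bar>\<beta>\<bar> * \<gamma>^3) * real n"
proof -
  interpret unit: residual_weights A n \<beta> B "\<lambda>j x. 1" 1 0
    by unfold_locales (auto simp: symm diag nonneg)
  have "ising_expect A n \<beta> B (\<lambda>x. (\<Sum>j<n. row_sum A n j * unit.resid j x)^2) \<le>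
     4 * 1 ^ 2 * (\<Sum>j<n. (row_sum A n j) ^ 2)
       + 2 * 1 * (0 + \<bar>\<beta>\<bar> * 1) * (\<Sum>j<n. \<Sum>k<n. \<bar>row_sum A n j\<bar> * \<bar>row_sum A n k\<bar> * A n k j)"
    by (rule unit.ising_expect_sum_resid_sq_le)
  also have "\<dots> \<le> 4 * (\<Sum>j<n. \<gamma> ^ 2) + 2 * \<bar>\<beta>\<bar> * (\<gamma> ^ 2 * (real n * \<gamma>))"
  proof -
    have "(\<Sum>j<n. (row_sum A n j) ^ 2) \<le> (\<Sum>j<n. \<gamma> ^ 2)"
      using row_sum_nonneg row_sum_le by (intro sum_mono power_mono) auto
    moreover have "(\<Sum>j<n. \<Sum>k<n. \<bar>row_sum A n j\<bar> * \<bar>row_sum A n k\<bar> * A n k j) \<le> \<gamma> ^ 2 * (real n * \<gamma>)"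
      using row_sum_nonneg row_sum_le by (intro sum_abs_bilinear_le) auto
    ultimately show ?thesis
      by (simp add: add_mono mult_left_mono)
  qed
  finally show ?thesis
    unfolding unit.resid_def by (simp add: algebra_simps power3_eq_cube power2_eq_square)
qed

lemma expect_loc_field_residual_sq_le:
  "ising_expect A n \<beta> B (\<lambda>x. (\<Sum>j<n. loc_field A n x j * (x j - tanh (\<beta> * loc_field A n x j + B)))^2)
     \<le> (4 * \<gamma>^2 + 2 * \<gamma> * (2 + \<bar>\<beta>\<bar> * \<gamma>) * \<gamma>) * real n"
proof -
  interpret field: residual_weights A n \<beta> B "\<lambda>j x. loc_field A n x j" \<gamma> 2
  proof unfold_locales
    show "loc_field A n (flip j x) j = loc_field A n x j" if "j < n" for j x
      using that diag by (simp add: loc_field_flip)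
    show "\<bar>loc_field A n x j\<bar> \<le> \<gamma>" if "j < n" "x \<in> configs n" for j x
      using that by (rule abs_loc_field_le[rotated])
    show "\<bar>loc_field A n (flip j x) k - loc_field A n x k\<bar> \<le> 2 * A n k j"
      if "j < n" "k < n" "j \<noteq> k" "x \<in> configs n" for j k x
      using that abs_spin[of x n j] nonneg[of k j] by (simp add: loc_field_flip abs_mult)
  qed (auto simp: symm diag nonneg)
  have "ising_expect A n \<beta> B (\<lambda>x. (\<Sum>j<n. 1 * field.resid j x)^2) \<le>
     4 * \<gamma> ^ 2 * (\<Sum>j<n. 1 ^ 2) + 2 * \<gamma> * (2 + \<bar>\<beta>\<bar> * \<gamma>) * (\<Sum>j<n. \<Sum>k<n. \<bar>1\<bar> * \<bar>1\<bar> * A n k j)"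
    by (rule field.ising_expect_sum_resid_sq_le)
  also have "\<dots> \<le> 4 * \<gamma> ^ 2 * real n + 2 * \<gamma> * (2 + \<bar>\<beta>\<bar> * \<gamma>) * (1 ^ 2 * (real n * \<gamma>))"
    using sum_abs_bilinear_le[of "\<lambda>j. 1" 1] gamma_nonneg by (simp add: mult_left_mono)
  finally show ?thesis
    unfolding field.resid_def by (simp add: algebra_simps)
qed

lemma expect_smoothed_residual_sq_le:
  "ising_expect A n \<beta> B (\<lambda>x. \<Sum>i<n. (\<Sum>j<n. A n i j * (x j - tanh (\<beta> * loc_field A n x j + B)))^2)
     \<le> (4 + 2 * \<bar>\<beta>\<bar> * \<gamma>) * (\<Sum>i<n. \<Sum>j<n. (A n i j)^2)"
proof -
  interpret unit: residual_weights A n \<beta> B "\<lambda>j x. 1" 1 0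
    by unfold_locales (auto simp: symm diag nonneg)
  have "ising_expect A n \<beta> B (\<lambda>x. \<Sum>i<n. (\<Sum>j<n. A n i j * unit.resid j x)^2)
     = (\<Sum>i<n. ising_expect A n \<beta> B (\<lambda>x. (\<Sum>j<n. A n i j * unit.resid j x)^2))"
    by (rule ising_expect_sum)
  also have "\<dots> \<le> (\<Sum>i<n. 4 * 1 ^ 2 * (\<Sum>j<n. (A n i j) ^ 2)
      + 2 * 1 * (0 + \<bar>\<beta>\<bar> * 1) * (\<Sum>j<n. \<Sum>k<n. \<bar>A n i j\<bar> * \<bar>A n i k\<bar> * A n k j))"
    by (intro sum_mono unit.ising_expect_sum_resid_sq_le)
  also have "\<dots> = 4 * (\<Sum>i<n. \<Sum>j<n. (A n i j) ^ 2)
      + 2 * \<bar>\<beta>\<bar> * (\<Sum>i<n. \<Sum>j<n. \<Sum>k<n. A n i j * A n i k * A n k j)"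
    using nonneg by (simp add: sum.distrib sum_distrib_left)
  also have "\<dots> \<le> 4 * (\<Sum>i<n. \<Sum>j<n. (A n i j) ^ 2) + 2 * \<bar>\<beta>\<bar> * (\<gamma> * (\<Sum>i<n. \<Sum>j<n. (A n i j)^2))"
    using sum_triangles_le by (intro add_left_mono mult_left_mono) auto
  finally show ?thesis
    unfolding unit.resid_def by (simp add: algebra_simps)
qed

end

section \<open>Small \<open>T\<^sub>n\<close> forces nearly constant row sums\<close>

lemma square_add_le: "(a + b)^2 \<le> 2 * (a^2 + (b::real)^2)"
  using sum_squares_bound[of a b] by (simp add: power2_sum)

lemma square_add4_le: "(a + b + c + d)^2 \<le> 4 * (a^2 + b^2 + c^2 + (d::real)^2)"
proof -
  have "0 \<le> (a-b)^2 + (a-c)^2 + (a-d)^2 + (b-c)^2 + (b-d)^2 + (c-d)^2" by simp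
  then show ?thesis by (simp add: power2_eq_square algebra_simps)
qed

text \<open>If the mean field \<open>c\<close> nearly solves \<open>c = tanh (\<beta> c + B) Rb\<close>, then \<open>tanh (\<beta> c + B)\<close> stays away
  from zero because \<open>B \<noteq> 0\<close>.\<close>

lemma abs_tanh_mean_field_ge:
  fixes \<beta> \<gamma> c Rb B :: real
  assumes \<beta>: "\<beta> > 0" and Rb: "0 \<le> Rb" "Rb \<le> \<gamma>"
    and gap: "\<bar>c - tanh (\<beta> * c + B) * Rb\<bar> \<le> \<bar>tanh B\<bar> / (2 * \<beta>)"
  shows "\<bar>tanh B\<bar> / (2 * (1 + \<beta> * \<gamma>)) \<le> \<bar>tanh (\<beta> * c + B)\<bar>"
proof -
  define t where "t = tanh (\<beta> * c + B)"
  have "\<bar>t * Rb\<bar> \<le> \<bar>t\<bar> * \<gamma>"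
    using Rb by (simp add: abs_mult mult_left_mono)
  then have "\<beta> * \<bar>c\<bar> \<le> \<beta> * (\<bar>t\<bar> * \<gamma> + \<bar>tanh B\<bar> / (2 * \<beta>))"
    using gap \<beta> unfolding t_def by (intro mult_left_mono) auto
  then have c: "\<beta> * \<bar>c\<bar> \<le> \<beta> * \<gamma> * \<bar>t\<bar> + \<bar>tanh B\<bar> / 2"
    using \<beta> by (simp add: algebra_simps)
  have "\<bar>tanh B\<bar> \<le> \<bar>t\<bar> + \<bar>\<beta> * c\<bar>"
    using abs_tanh_diff_le[of "\<beta> * c + B" B] unfolding t_def by linarith
  then have "\<bar>tanh B\<bar> / 2 \<le> \<bar>t\<bar> * (1 + \<beta> * \<gamma>)"
    using c \<beta> by (simp add: abs_mult algebra_simps)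
  moreover have "1 + \<beta> * \<gamma> > 0"
    using \<beta> Rb by (simp add: add_pos_nonneg)
  ultimately show ?thesis
    unfolding t_def by (simp add: divide_le_eq algebra_simps)
qed

context ising_interaction
begin

lemma sum_loc_field: "(\<Sum>i<n. loc_field A n x i) = (\<Sum>j<n. row_sum A n j * x j)"
proof -
  have "(\<Sum>i<n. loc_field A n x i) = (\<Sum>j<n. \<Sum>i<n. A n i j * x j)"
    unfolding loc_field_def by (rule sum.swap)
  also have "\<dots> = (\<Sum>j<n. row_sum A n j * x j)"
    by (intro sum.cong refl) (simp add: sum_distrib_right[symmetric] col_sum_eq_row_sum)
  finally show ?thesis .
qed

lemma row_sum_mean_bounds: "0 \<le> row_sum_mean A n" "row_sum_mean A n \<le> \<gamma>"
proof -
  have "0 \<le> (\<Sum>j<n. row_sum A n j)"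
    using row_sum_nonneg by (intro sum_nonneg) auto
  then show "0 \<le> row_sum_mean A n"
    unfolding row_sum_mean_def by simp
  have "(\<Sum>j<n. row_sum A n j) \<le> (\<Sum>j<n. \<gamma>)"
    using row_sum_le by (intro sum_mono) auto
  then show "row_sum_mean A n \<le> \<gamma>"
    unfolding row_sum_mean_def using gamma_nonneg
    by (cases "n = 0") (simp_all add: divide_le_eq mult.commute)
qed

lemma sum_smoothed_sq_le: "(\<Sum>i<n. (\<Sum>j<n. A n i j * d j)^2) \<le> \<gamma>^2 * (\<Sum>j<n. (d j)^2)"
proof -
  have "(\<Sum>i<n. (\<Sum>j<n. A n i j * d j)^2) \<le> (\<Sum>i<n. \<gamma> * (\<Sum>j<n. A n i j * (d j)^2))"
  proof (intro sum_mono)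
    fix i assume i: "i \<in> {..<n}"
    have "(\<Sum>j<n. A n i j * d j)^2 = (\<Sum>j<n. sqrt (A n i j) * (sqrt (A n i j) * d j))^2"
      using nonneg i by (intro arg_cong[where f="\<lambda>t. t^2"] sum.cong) (auto simp: mult.assoc[symmetric])
    also have "\<dots> \<le> (\<Sum>j<n. (sqrt (A n i j))^2) * (\<Sum>j<n. (sqrt (A n i j) * d j)^2)"
      by (rule Cauchy_Schwarz_ineq_sum)
    also have "\<dots> = row_sum A n i * (\<Sum>j<n. A n i j * (d j)^2)"
      unfolding row_sum_def using nonneg i by (simp add: power_mult_distrib)
    also have "\<dots> \<le> \<gamma> * (\<Sum>j<n. A n i j * (d j)^2)"
      using row_sum_le i nonneg by (intro mult_right_mono sum_nonneg) auto
    finally show "(\<Sum>j<n. A n i j * d j)^2 \<le> \<gamma> * (\<Sum>j<n. A n i j * (d j)^2)" .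
  qed
  also have "\<dots> = \<gamma> * (\<Sum>j<n. row_sum A n j * (d j)^2)"
  proof -
    have "(\<Sum>i<n. \<Sum>j<n. A n i j * (d j)^2) = (\<Sum>j<n. \<Sum>i<n. A n i j * (d j)^2)"
      by (rule sum.swap)
    also have "\<dots> = (\<Sum>j<n. row_sum A n j * (d j)^2)"
      by (intro sum.cong refl) (simp add: sum_distrib_right[symmetric] col_sum_eq_row_sum)
    finally show ?thesis
      by (simp add: sum_distrib_left[symmetric])
  qed
  also have "\<dots> \<le> \<gamma> * (\<Sum>j<n. \<gamma> * (d j)^2)"
    using row_sum_le gamma_nonneg by (intro mult_left_mono sum_mono mult_right_mono) auto
  finally show ?thesis
    by (simp add: sum_distrib_left power2_eq_square mult.assoc)
qed

lemma sum_tanh_loc_field_dev_sq_le: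
  assumes "n > 0"
  shows "(\<Sum>j<n. (tanh (\<beta> * loc_field A n x j + B) - tanh (\<beta> * loc_field_mean A n x + B))^2)
         \<le> \<beta>^2 * (real n * T_stat A n x)"
proof -
  have "(\<Sum>j<n. (tanh (\<beta> * loc_field A n x j + B) - tanh (\<beta> * loc_field_mean A n x + B))^2)
        \<le> (\<Sum>j<n. (\<beta> * (loc_field A n x j - loc_field_mean A n x))^2)"
  proof (intro sum_mono)
    fix j
    have "\<bar>tanh (\<beta> * loc_field A n x j + B) - tanh (\<beta> * loc_field_mean A n x + B)\<bar> \<le>
          \<bar>\<beta> * (loc_field A n x j - loc_field_mean A n x)\<bar>"
      using abs_tanh_diff_le[of "\<beta> * loc_field A n x j + B" "\<beta> * loc_field_mean A n x + B"]
      by (simp add: algebra_simps)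
    then show "(tanh (\<beta> * loc_field A n x j + B) - tanh (\<beta> * loc_field_mean A n x + B))^2 \<le>
          (\<beta> * (loc_field A n x j - loc_field_mean A n x))^2"
      by (simp add: abs_le_square_iff)
  qed
  also have "\<dots> = \<beta>^2 * (\<Sum>j<n. (loc_field A n x j - loc_field_mean A n x)^2)"
    by (simp add: power_mult_distrib sum_distrib_left)
  also have "\<dots> = \<beta>^2 * (real n * T_stat A n x)"
    using assms by (simp add: T_stat_def)
  finally show ?thesis .
qed

lemma mean_field_gap_sq_le:
  fixes x :: "nat \<Rightarrow> real"
  assumes n: "n > 0"
  defines "t \<equiv> tanh (\<beta> * loc_field_mean A n x + B)"
    and "F \<equiv> (\<Sum>j<n. row_sum A n j * (x j - tanh (\<beta> * loc_field A n x j + B)))"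
  shows "(loc_field_mean A n x - t * row_sum_mean A n)^2 \<le> 2 * \<gamma>^2 * \<beta>^2 * T_stat A n x + 2 * (F / n)^2"
proof -
  define R where "R j = row_sum A n j" for j
  define tj where "tj j = tanh (\<beta> * loc_field A n x j + B)" for j
  define S where "S = (\<Sum>j<n. R j * (tj j - t))"
  have "real n * loc_field_mean A n x = (\<Sum>j<n. R j * x j)"
    unfolding loc_field_mean_def R_def using n by (simp add: sum_loc_field)
  also have "\<dots> = t * (\<Sum>j<n. R j) + S + F"
    unfolding S_def F_def R_def tj_def
    by (simp add: sum_distrib_left sum.distrib[symmetric] algebra_simps)
  also have "(\<Sum>j<n. R j) = real n * row_sum_mean A n"
    unfolding row_sum_mean_def R_def using n by simp
  finally have gap: "real n * (loc_field_mean A n x - t * row_sum_mean A n) = S + F"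
    by (simp add: algebra_simps)
  have "S^2 \<le> (\<Sum>j<n. (R j)^2) * (\<Sum>j<n. (tj j - t)^2)"
    unfolding S_def by (rule Cauchy_Schwarz_ineq_sum)
  also have "\<dots> \<le> (real n * \<gamma>^2) * (\<beta>^2 * (real n * T_stat A n x))"
  proof (rule mult_mono)
    have "(\<Sum>j<n. (R j)^2) \<le> (\<Sum>j<n. \<gamma>^2)"
      unfolding R_def using row_sum_nonneg row_sum_le by (intro sum_mono power_mono) auto
    then show "(\<Sum>j<n. (R j)^2) \<le> real n * \<gamma>^2"
      by simp
    show "(\<Sum>j<n. (tj j - t)^2) \<le> \<beta>^2 * (real n * T_stat A n x)"
      unfolding tj_def t_def by (rule sum_tanh_loc_field_dev_sq_le[OF n])
  qed (auto intro: sum_nonneg)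
  finally have "S^2 \<le> (real n)^2 * (\<gamma>^2 * \<beta>^2 * T_stat A n x)"
    by (simp add: power2_eq_square mult_ac)
  then have "(real n)^2 * (loc_field_mean A n x - t * row_sum_mean A n)^2
      \<le> (real n)^2 * (2 * \<gamma>^2 * \<beta>^2 * T_stat A n x + 2 * (F / n)^2)"
    using square_add_le[of S F] n unfolding gap[symmetric] power_mult_distrib
    by (simp add: algebra_simps power_divide)
  then show ?thesis
    using n by simp
qed

lemma row_sum_variance_le:
  fixes x :: "nat \<Rightarrow> real"
  assumes n: "n > 0"
  defines "t \<equiv> tanh (\<beta> * loc_field_mean A n x + B)"
    and "D \<equiv> (\<Sum>i<n. (\<Sum>j<n. A n i j * (x j - tanh (\<beta> * loc_field A n x j + B)))^2)"
  shows "t^2 * ((\<Sum>i<n. (row_sum A n i - row_sum_mean A n)^2) / n)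
    \<le> 4 * ((1 + \<gamma>^2 * \<beta>^2) * T_stat A n x + D / n + (loc_field_mean A n x - t * row_sum_mean A n)^2)"
proof -
  define m where "m i = loc_field A n x i" for i
  define c where "c = loc_field_mean A n x"
  define Rb where "Rb = row_sum_mean A n"
  define g where "g i = (\<Sum>j<n. A n i j * (tanh (\<beta> * m j + B) - t))" for i
  define e where "e i = (\<Sum>j<n. A n i j * (x j - tanh (\<beta> * m j + B)))" for i
  have m: "m i = t * row_sum A n i + g i + e i" for i
    unfolding m_def loc_field_def g_def e_def row_sum_def
    by (simp add: sum_distrib_left sum.distrib[symmetric] algebra_simps)
  have "(\<Sum>i<n. (t * (row_sum A n i - Rb))^2)
      \<le> (\<Sum>i<n. 4 * ((m i - c)^2 + (g i)^2 + (e i)^2 + (c - t * Rb)^2))"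
  proof (intro sum_mono)
    fix i
    have "t * (row_sum A n i - Rb) = (m i - c) + (- g i) + (- e i) + (c - t * Rb)"
      using m[of i] by (simp add: algebra_simps)
    then show "(t * (row_sum A n i - Rb))^2 \<le> 4 * ((m i - c)^2 + (g i)^2 + (e i)^2 + (c - t * Rb)^2)"
      using square_add4_le[of "m i - c" "- g i" "- e i" "c - t * Rb"] by simp
  qed
  also have "\<dots> = 4 * ((\<Sum>i<n. (m i - c)^2) + (\<Sum>i<n. (g i)^2) + (\<Sum>i<n. (e i)^2) + real n * (c - t * Rb)^2)"
    by (simp add: sum.distrib sum_distrib_left)
  also have "\<dots> \<le> 4 * (real n * T_stat A n x + \<gamma>^2 * (\<beta>^2 * (real n * T_stat A n x)) + D + real n * (c - t * Rb)^2)"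
  proof -
    have "(\<Sum>i<n. (m i - c)^2) = real n * T_stat A n x"
      unfolding m_def c_def T_stat_def using n by simp
    moreover have "(\<Sum>i<n. (g i)^2) \<le> \<gamma>^2 * (\<beta>^2 * (real n * T_stat A n x))"
    proof -
      have "(\<Sum>i<n. (g i)^2) \<le> \<gamma>^2 * (\<Sum>j<n. (tanh (\<beta> * m j + B) - t)^2)"
        unfolding g_def by (rule sum_smoothed_sq_le)
      also have "\<dots> \<le> \<gamma>^2 * (\<beta>^2 * (real n * T_stat A n x))"
        unfolding m_def t_def by (intro mult_left_mono sum_tanh_loc_field_dev_sq_le[OF n]) auto
      finally show ?thesis .
    qed
    moreover have "(\<Sum>i<n. (e i)^2) = D"
      unfolding e_def m_def D_def ..
    ultimately show ?thesis
      by simp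
  qed
  finally have bound: "(\<Sum>i<n. (t * (row_sum A n i - Rb))^2)
      \<le> 4 * (real n * T_stat A n x + \<gamma>^2 * (\<beta>^2 * (real n * T_stat A n x)) + D + real n * (c - t * Rb)^2)" .
  have "real n * (t^2 * ((\<Sum>i<n. (row_sum A n i - Rb)^2) / n)) = (\<Sum>i<n. (t * (row_sum A n i - Rb))^2)"
    using n by (simp add: power_mult_distrib sum_distrib_left[symmetric])
  moreover have "real n * (4 * ((1 + \<gamma>^2 * \<beta>^2) * T_stat A n x + D / n + (c - t * Rb)^2))
      = 4 * (real n * T_stat A n x + \<gamma>^2 * (\<beta>^2 * (real n * T_stat A n x)) + D + real n * (c - t * Rb)^2)"
    using n by (simp add: algebra_simps)
  ultimately have "real n * (t^2 * ((\<Sum>i<n. (row_sum A n i - Rb)^2) / n))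
      \<le> real n * (4 * ((1 + \<gamma>^2 * \<beta>^2) * T_stat A n x + D / n + (c - t * Rb)^2))"
    using bound by simp
  then show ?thesis
    unfolding c_def Rb_def by (rule mult_left_le_imp_le) (use n in simp)
qed

lemma row_sum_variance_le_of_small_T:
  fixes \<delta> \<eta> :: real
  assumes n: "n > 0" and \<beta>: "\<beta> > 0" and T: "T_stat A n x \<le> \<delta>"
    and D: "(\<Sum>i<n. (\<Sum>j<n. A n i j * (x j - tanh (\<beta> * loc_field A n x j + B)))^2) \<le> \<eta> * n"
    and F: "(\<Sum>j<n. row_sum A n j * (x j - tanh (\<beta> * loc_field A n x j + B)))^2 \<le> (\<eta> * n)^2"
    and small: "2 * \<gamma>^2 * \<beta>^2 * \<delta> + 2 * \<eta>^2 \<le> (\<bar>tanh B\<bar> / (2 * \<beta>))^2"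
  shows "(\<bar>tanh B\<bar> / (2 * (1 + \<beta> * \<gamma>)))^2 * ((\<Sum>i<n. (row_sum A n i - row_sum_mean A n)^2) / n)
    \<le> 4 * (\<delta> * (1 + 3 * \<gamma>^2 * \<beta>^2) + \<eta> + 2 * \<eta>^2)"
proof -
  define t where "t = tanh (\<beta> * loc_field_mean A n x + B)"
  define gap where "gap = loc_field_mean A n x - t * row_sum_mean A n"
  define V where "V = (\<Sum>i<n. (row_sum A n i - row_sum_mean A n)^2) / n"
  define F where "F = (\<Sum>j<n. row_sum A n j * (x j - tanh (\<beta> * loc_field A n x j + B)))"
  have nr: "real n > 0"
    using n by simp
  have "(F / n)^2 \<le> \<eta>^2"
    using F nr unfolding F_def by (simp add: power_divide power_mult_distrib divide_le_eq)
  moreover have "\<gamma>^2 * \<beta>^2 * T_stat A n x \<le> \<gamma>^2 * \<beta>^2 * \<delta>"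
    using T by (intro mult_left_mono) auto
  ultimately have gap_sq: "gap^2 \<le> 2 * \<gamma>^2 * \<beta>^2 * \<delta> + 2 * \<eta>^2"
    using mean_field_gap_sq_le[OF n, of x] unfolding gap_def t_def F_def by linarith
  then have "gap^2 \<le> (\<bar>tanh B\<bar> / (2 * \<beta>))^2"
    using small by linarith
  then have "\<bar>gap\<bar> \<le> \<bar>tanh B\<bar> / (2 * \<beta>)"
    using \<beta> by (simp add: power2_le_iff_abs_le)
  then have "\<bar>tanh B\<bar> / (2 * (1 + \<beta> * \<gamma>)) \<le> \<bar>t\<bar>"
    unfolding gap_def t_def using \<beta> row_sum_mean_bounds by (intro abs_tanh_mean_field_ge) auto
  then have "(\<bar>tanh B\<bar> / (2 * (1 + \<beta> * \<gamma>)))^2 \<le> \<bar>t\<bar>^2"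
    using \<beta> gamma_nonneg by (intro power_mono) auto
  then have "(\<bar>tanh B\<bar> / (2 * (1 + \<beta> * \<gamma>)))^2 \<le> t^2"
    by simp
  moreover have "V \<ge> 0"
    unfolding V_def by (intro divide_nonneg_nonneg sum_nonneg) auto
  ultimately have "(\<bar>tanh B\<bar> / (2 * (1 + \<beta> * \<gamma>)))^2 * V \<le> t^2 * V"
    by (rule mult_right_mono)
  also have "\<dots> \<le> 4 * ((1 + \<gamma>^2 * \<beta>^2) * T_stat A n x
      + (\<Sum>i<n. (\<Sum>j<n. A n i j * (x j - tanh (\<beta> * loc_field A n x j + B)))^2) / n + gap^2)"
    unfolding V_def t_def gap_def by (rule row_sum_variance_le[OF n])
  also have "\<dots> \<le> 4 * ((1 + \<gamma>^2 * \<beta>^2) * \<delta> + \<eta> + (2 * \<gamma>^2 * \<beta>^2 * \<delta> + 2 * \<eta>^2))"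
    using T D gap_sq nr by (intro mult_left_mono add_mono) (auto simp: divide_le_eq)
  finally show ?thesis
    unfolding V_def by (simp add: algebra_simps)
qed

end

section \<open>The pseudo-likelihood equations\<close>

text \<open>For a field vector \<open>m\<close> and spins \<open>x\<close>, \<open>pl_loglik\<close> is the log pseudo-likelihood up to the
  constant \<open>n ln 2\<close>, and \<open>pl_grad_beta\<close>, \<open>pl_grad_B\<close> are its partial derivatives in \<open>p = (\<beta>, B)\<close>.\<close>

definition pl_loglik :: "nat \<Rightarrow> (nat \<Rightarrow> real) \<Rightarrow> (nat \<Rightarrow> real) \<Rightarrow> real \<times> real \<Rightarrow> real" where
  "pl_loglik n m x p = (\<Sum>i<n. x i * (fst p * m i + snd p) - ln (cosh (fst p * m i + snd p)))"

definition pl_grad_beta :: "nat \<Rightarrow> (nat \<Rightarrow> real) \<Rightarrow> (nat \<Rightarrow> real) \<Rightarrow> real \<times> real \<Rightarrow> real" where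
  "pl_grad_beta n m x p = (\<Sum>i<n. m i * (x i - tanh (fst p * m i + snd p)))"

definition pl_grad_B :: "nat \<Rightarrow> (nat \<Rightarrow> real) \<Rightarrow> (nat \<Rightarrow> real) \<Rightarrow> real \<times> real \<Rightarrow> real" where
  "pl_grad_B n m x p = (\<Sum>i<n. x i - tanh (fst p * m i + snd p))"

lemma pl_root_iff_grad_eq_0:
  "pl_root A n x p \<longleftrightarrow> pl_grad_beta n (loc_field A n x) x p = 0 \<and> pl_grad_B n (loc_field A n x) x p = 0"
  unfolding pl_root_def pl_grad_beta_def pl_grad_B_def by simp

lemma sum_sq_le_of_shift:
  fixes u1 u2 c C :: real
  assumes "c^2 \<le> C"
  shows "u1^2 + u2^2 \<le> (2 + 2 * C) * (u1^2 + (u1 * c + u2)^2)"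
proof -
  define v where "v = u1 * c + u2"
  have "u2^2 \<le> 2 * (v^2 + (u1 * c)^2)"
    using square_add_le[of v "- u1 * c"] unfolding v_def by simp
  moreover have "(u1 * c)^2 \<le> u1^2 * C"
    using assms by (simp add: power_mult_distrib mult_left_mono)
  moreover have "0 \<le> C * v^2"
    using order_trans[OF zero_le_power2 assms] by simp
  moreover have "(2 + 2 * C) * (u1^2 + v^2) = u1^2 + 2 * (v^2 + u1^2 * C) + (u1^2 + 2 * (C * v^2))"
    by (simp add: algebra_simps)
  ultimately show ?thesis
    unfolding v_def[symmetric] by (smt (verit) zero_le_power2)
qed

text \<open>The design of the regression \<open>x\<^sub>i \<approx> tanh (p\<^sub>1 m\<^sub>i + p\<^sub>2)\<close> is well conditioned as soon as the
  empirical variance of the \<open>m\<^sub>i\<close> is bounded below.\<close>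

lemma sum_affine_sq_ge:
  fixes m :: "nat \<Rightarrow> real"
  assumes n: "n > 0" and Tp: "0 \<le> Tp" "Tp \<le> 1" "Tp \<le> (\<Sum>i<n. (m i - (\<Sum>j<n. m j) / n)^2) / n"
    and C: "((\<Sum>j<n. m j) / n)^2 \<le> C"
  shows "real n * Tp / (2 + 2 * C) * (u1^2 + u2^2) \<le> (\<Sum>i<n. (u1 * m i + u2)^2)"
proof -
  define c where "c = (\<Sum>j<n. m j) / n"
  define v where "v = u1 * c + u2"
  have nr: "real n > 0"
    using n by simp
  have C0: "0 \<le> C"
    using order_trans[OF zero_le_power2 C] .
  have "(\<Sum>i<n. m i - c) = 0"
    unfolding c_def using nr by (simp add: sum_subtractf)
  moreover have "(\<Sum>i<n. (u1 * m i + u2)^2) = (\<Sum>i<n. u1^2 * (m i - c)^2 + 2 * u1 * v * (m i - c) + v^2)"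
    unfolding v_def by (intro sum.cong refl) (simp add: power2_eq_square algebra_simps)
  ultimately have expand: "(\<Sum>i<n. (u1 * m i + u2)^2) = u1^2 * (\<Sum>i<n. (m i - c)^2) + real n * v^2"
    by (simp add: sum.distrib sum_distrib_left[symmetric])
  have "real n * Tp \<le> (\<Sum>i<n. (m i - c)^2)"
    using Tp(3) nr unfolding c_def by (simp add: le_divide_eq mult.commute)
  then have "real n * Tp * u1^2 \<le> (\<Sum>i<n. (m i - c)^2) * u1^2"
    by (rule mult_right_mono) simp
  moreover have "real n * Tp * v^2 \<le> real n * v^2"
    using Tp nr by (simp add: mult_left_le_one_le)
  moreover have "Tp / (2 + 2 * C) * (u1^2 + u2^2) \<le> Tp * (u1^2 + v^2)"
    using mult_left_mono[OF sum_sq_le_of_shift[OF C[folded c_def], of u1 u2], of "Tp / (2 + 2 * C)"]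
      Tp C0 unfolding v_def by simp
  then have "real n * (Tp / (2 + 2 * C) * (u1^2 + u2^2)) \<le> real n * (Tp * (u1^2 + v^2))"
    using nr by (intro mult_left_mono) auto
  ultimately show ?thesis
    unfolding expand by (simp add: algebra_simps)
qed

lemma pl_loglik_diff_le:
  fixes m x :: "nat \<Rightarrow> real" and p p0 :: "real \<times> real"
  assumes "\<And>i. i < n \<Longrightarrow> \<bar>fst p0 * m i + snd p0\<bar> \<le> M"
    and "\<And>i. i < n \<Longrightarrow> \<bar>fst p * m i + snd p\<bar> \<le> M"
  shows "pl_loglik n m x p - pl_loglik n m x p0
     \<le> (fst p - fst p0) * pl_grad_beta n m x p0 + (snd p - snd p0) * pl_grad_B n m x p0
       - (1 - tanh M ^ 2) / 2 * (\<Sum>i<n. ((fst p - fst p0) * m i + (snd p - snd p0))^2)"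
proof -
  define z where "z i = fst p0 * m i + snd p0" for i
  define w where "w i = (fst p - fst p0) * m i + (snd p - snd p0)" for i
  have zw: "fst p * m i + snd p = z i + w i" for i
    unfolding z_def w_def by (simp add: algebra_simps)
  have "pl_loglik n m x p - pl_loglik n m x p0 = (\<Sum>i<n. x i * w i - (ln (cosh (z i + w i)) - ln (cosh (z i))))"
    unfolding pl_loglik_def zw z_def[symmetric] by (simp add: sum_subtractf[symmetric] algebra_simps)
  also have "\<dots> \<le> (\<Sum>i<n. w i * (x i - tanh (z i)) - (1 - tanh M ^ 2) / 2 * (w i)^2)"
  proof (intro sum_mono)
    fix i assume "i \<in> {..<n}"
    then have "tanh (z i) * w i + (1 - tanh M ^ 2) / 2 * (w i)^2 \<le> ln (cosh (z i + w i)) - ln (cosh (z i))"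
      using assms zw by (intro ln_cosh_diff_ge) (auto simp: z_def)
    then show "x i * w i - (ln (cosh (z i + w i)) - ln (cosh (z i)))
        \<le> w i * (x i - tanh (z i)) - (1 - tanh M ^ 2) / 2 * (w i)^2"
      by (simp add: algebra_simps)
  qed
  also have "\<dots> = (fst p - fst p0) * pl_grad_beta n m x p0 + (snd p - snd p0) * pl_grad_B n m x p0
      - (1 - tanh M ^ 2) / 2 * (\<Sum>i<n. (w i)^2)"
    unfolding pl_grad_beta_def pl_grad_B_def w_def z_def
    by (simp add: sum_subtractf sum.distrib sum_distrib_left algebra_simps)
  finally show ?thesis
    unfolding w_def .
qed

lemma DERIV_pl_loglik_line:
  "((\<lambda>s. pl_loglik n m x (fst q + s * a, snd q + s * b)) has_real_derivative
     (\<Sum>i<n. (x i - tanh (fst q * m i + snd q)) * (a * m i + b))) (at 0)"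
proof -
  define z where "z i = fst q * m i + snd q" for i
  define w where "w i = a * m i + b" for i
  have "(\<lambda>s. pl_loglik n m x (fst q + s * a, snd q + s * b))
      = (\<lambda>s. \<Sum>i<n. x i * (z i + s * w i) - ln (cosh (z i + s * w i)))"
    unfolding pl_loglik_def z_def w_def by (intro ext sum.cong) (auto simp: algebra_simps)
  moreover have "((\<lambda>s. \<Sum>i<n. x i * (z i + s * w i) - ln (cosh (z i + s * w i))) has_real_derivative
     (\<Sum>i<n. x i * w i - tanh (z i + 0 * w i) * w i)) (at 0)"
    by (intro DERIV_sum DERIV_diff DERIV_ln_cosh_affine) (auto intro!: derivative_eq_intros)
  ultimately show ?thesis
    unfolding z_def w_def by (simp add: algebra_simps)
qed

lemma pl_grad_eq_0_of_local_max:
  assumes d: "d > 0" and max: "\<And>p. dist p q < d \<Longrightarrow> pl_loglik n m x p \<le> pl_loglik n m x q"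
  shows "pl_grad_beta n m x q = 0" "pl_grad_B n m x q = 0"
proof -
  have dir: "(\<Sum>i<n. (x i - tanh (fst q * m i + snd q)) * (a * m i + b)) = 0" if ab: "a^2 + b^2 = 1" for a b
  proof (rule DERIV_local_max[OF DERIV_pl_loglik_line d], intro allI impI)
    fix s :: real assume "\<bar>0 - s\<bar> < d"
    moreover have "dist (fst q + s * a, snd q + s * b) q = \<bar>s\<bar>"
      using ab by (cases q) (simp add: dist_Pair_Pair dist_real_def power_mult_distrib
          distrib_left[symmetric])
    ultimately show "pl_loglik n m x (fst q + s * a, snd q + s * b) \<le> pl_loglik n m x (fst q + 0 * a, snd q + 0 * b)"
      using max by simp
  qed
  from dir[of 1 0] show "pl_grad_beta n m x q = 0"
    unfolding pl_grad_beta_def by (simp add: mult.commute)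
  from dir[of 0 1] show "pl_grad_B n m x q = 0"
    unfolding pl_grad_B_def by simp
qed

lemma pl_grad_root_unique:
  fixes m :: "nat \<Rightarrow> real"
  assumes n: "n > 0" and Tp: "0 < Tp" "Tp \<le> 1" "Tp \<le> (\<Sum>i<n. (m i - (\<Sum>j<n. m j) / n)^2) / n"
    and C: "((\<Sum>j<n. m j) / n)^2 \<le> C"
    and p: "pl_grad_beta n m x p = 0" "pl_grad_B n m x p = 0"
    and q: "pl_grad_beta n m x q = 0" "pl_grad_B n m x q = 0"
  shows "p = q"
proof -
  define u1 where "u1 = fst q - fst p"
  define u2 where "u2 = snd q - snd p"
  define z where "z i = fst p * m i + snd p" for i
  define w where "w i = u1 * m i + u2" for i
  define lam where "lam = real n * Tp / (2 + 2 * C)"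
  have zq: "fst q * m i + snd q = z i + w i" for i
    unfolding z_def w_def u1_def u2_def by (simp add: algebra_simps)
  \<comment> \<open>monotonicity of tanh along the segment from \<open>p\<close> to \<open>q\<close>\<close>
  have "(\<Sum>i<n. (tanh (z i + w i) - tanh (z i)) * w i) =
        u1 * (pl_grad_beta n m x p - pl_grad_beta n m x q) + u2 * (pl_grad_B n m x p - pl_grad_B n m x q)"
    unfolding pl_grad_beta_def pl_grad_B_def zq z_def[symmetric] w_def
    by (simp add: sum_subtractf[symmetric] sum_distrib_left sum.distrib[symmetric] algebra_simps)
  also have "\<dots> = 0"
    using p q by simp
  finally have "(\<Sum>i<n. (tanh (z i + w i) - tanh (z i)) * w i) = 0" .
  moreover have "0 \<le> (tanh (z i + w i) - tanh (z i)) * w i" for i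
    using tanh_diff_mult_diff_nonneg[of "z i + w i" "z i"] by simp
  ultimately have "(tanh (z i + w i) - tanh (z i)) * w i = 0" if "i < n" for i
    using that by (subst (asm) sum_nonneg_eq_0_iff) auto
  then have "w i = 0" if "i < n" for i
    using that tanh_diff_mult_diff_pos[of "z i + w i" "z i"] by force
  then have "(\<Sum>i<n. (u1 * m i + u2)^2) = 0"
    unfolding w_def by simp
  then have "lam * (u1^2 + u2^2) \<le> lam * 0"
    using sum_affine_sq_ge[OF n _ Tp(2,3) C, of u1 u2] Tp unfolding lam_def by simp
  moreover have "lam > 0"
    unfolding lam_def using n Tp order_trans[OF zero_le_power2 C] by simp
  ultimately have "u1^2 + u2^2 \<le> 0"
    by (rule mult_left_le_imp_le)
  then show ?thesis
    unfolding u1_def u2_def by (simp add: prod_eq_iff sum_power2_le_zero_iff)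
qed

lemma pl_loglik_lt_on_sphere:
  fixes m x :: "nat \<Rightarrow> real" and p0 :: "real \<times> real"
  assumes n: "n > 0" and m: "\<And>i. i < n \<Longrightarrow> \<bar>m i\<bar> \<le> \<gamma>"
    and Tp: "0 < Tp" "Tp \<le> 1" "Tp \<le> (\<Sum>i<n. (m i - (\<Sum>j<n. m j) / n)^2) / n"
    and C: "((\<Sum>j<n. m j) / n)^2 \<le> C"
    and r: "0 < r" "r \<le> 1" and M: "M = (\<bar>fst p0\<bar> + 1) * \<gamma> + \<bar>snd p0\<bar> + 1"
    and grad: "norm (pl_grad_beta n m x p0, pl_grad_B n m x p0) < (1 - tanh M ^ 2) / 2 * (real n * Tp / (2 + 2 * C)) * r"
    and p: "dist p0 p = r"
  shows "pl_loglik n m x p < pl_loglik n m x p0"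
proof -
  define u1 where "u1 = fst p - fst p0"
  define u2 where "u2 = snd p - snd p0"
  define lam where "lam = real n * Tp / (2 + 2 * C)"
  define cs where "cs = 1 - tanh M ^ 2"
  have u: "norm (u1, u2) = r"
    using p dist_commute[of p0 p] unfolding u1_def u2_def dist_norm by (cases p, cases p0) simp
  then have u_sq: "u1^2 + u2^2 = r^2"
    using r by (auto simp: norm_Pair)
  have "\<bar>u1\<bar> \<le> r" "\<bar>u2\<bar> \<le> r"
    using u norm_fst_le[of u1 u2] norm_snd_le[of u2 u1] by simp_all
  \<comment> \<open>both \<open>p0\<close> and \<open>p\<close> give affine fields bounded by \<open>M\<close>, where tanh has slope at least \<open>cs\<close>\<close>
  then have bound: "\<bar>fst q * m i + snd q\<bar> \<le> M" if "q = p0 \<or> q = p" "i < n" for q i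
  proof -
    have "\<bar>fst q\<bar> \<le> \<bar>fst p0\<bar> + 1" "\<bar>snd q\<bar> \<le> \<bar>snd p0\<bar> + 1"
      using that \<open>\<bar>u1\<bar> \<le> r\<close> \<open>\<bar>u2\<bar> \<le> r\<close> r unfolding u1_def u2_def by auto
    moreover have "\<bar>fst q * m i\<bar> \<le> (\<bar>fst p0\<bar> + 1) * \<gamma>"
      unfolding abs_mult using calculation m[OF that(2)] by (intro mult_mono) auto
    ultimately show ?thesis
      unfolding M using abs_triangle_ineq[of "fst q * m i" "snd q"] by linarith
  qed
  have "pl_loglik n m x p - pl_loglik n m x p0
      \<le> u1 * pl_grad_beta n m x p0 + u2 * pl_grad_B n m x p0 - cs / 2 * (\<Sum>i<n. (u1 * m i + u2)^2)"
    unfolding u1_def u2_def cs_def by (rule pl_loglik_diff_le) (auto intro: bound)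
  also have "\<dots> \<le> r * norm (pl_grad_beta n m x p0, pl_grad_B n m x p0) - cs / 2 * (lam * r^2)"
  proof -
    have "u1 * pl_grad_beta n m x p0 + u2 * pl_grad_B n m x p0 \<le> r * norm (pl_grad_beta n m x p0, pl_grad_B n m x p0)"
      using norm_cauchy_schwarz[of "(u1, u2)" "(pl_grad_beta n m x p0, pl_grad_B n m x p0)"] u
      by (simp add: inner_Pair)
    moreover have "lam * r^2 \<le> (\<Sum>i<n. (u1 * m i + u2)^2)"
      using sum_affine_sq_ge[OF n _ Tp(2,3) C, of u1 u2] Tp u_sq unfolding lam_def by simp
    moreover have "cs \<ge> 0"
      unfolding cs_def using tanh_sq_le_1[of M] by simp
    ultimately show ?thesis
      by (smt (verit, best) mult_left_mono divide_nonneg_nonneg zero_le_numeral)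
  qed
  also have "\<dots> < 0"
  proof -
    have "r * norm (pl_grad_beta n m x p0, pl_grad_B n m x p0) < r * (cs / 2 * lam * r)"
      using grad r unfolding cs_def lam_def by (intro mult_strict_left_mono) auto
    then show ?thesis
      by (simp add: power2_eq_square mult_ac)
  qed
  finally show ?thesis
    by simp
qed

text \<open>A small gradient at \<open>p0\<close> puts a critical point inside the ball of radius \<open>r\<close>: the maximum
  of the continuous \<open>pl_loglik\<close> over the closed ball cannot lie on the sphere.\<close>

lemma pl_grad_root_near:
  fixes m x :: "nat \<Rightarrow> real" and p0 :: "real \<times> real"
  assumes n: "n > 0" and m: "\<And>i. i < n \<Longrightarrow> \<bar>m i\<bar> \<le> \<gamma>"
    and Tp: "0 < Tp" "Tp \<le> 1" "Tp \<le> (\<Sum>i<n. (m i - (\<Sum>j<n. m j) / n)^2) / n"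
    and C: "((\<Sum>j<n. m j) / n)^2 \<le> C"
    and r: "0 < r" "r \<le> 1" and M: "M = (\<bar>fst p0\<bar> + 1) * \<gamma> + \<bar>snd p0\<bar> + 1"
    and grad: "norm (pl_grad_beta n m x p0, pl_grad_B n m x p0) < (1 - tanh M ^ 2) / 2 * (real n * Tp / (2 + 2 * C)) * r"
  shows "\<exists>q. pl_grad_beta n m x q = 0 \<and> pl_grad_B n m x q = 0 \<and> dist q p0 < r"
proof -
  have "continuous_on (cball p0 r) (pl_loglik n m x)"
    unfolding pl_loglik_def
    by (intro continuous_intros) (auto simp: cosh_real_pos[THEN less_imp_neq, symmetric])
  then obtain q where q: "q \<in> cball p0 r" and max: "\<And>p. p \<in> cball p0 r \<Longrightarrow> pl_loglik n m x p \<le> pl_loglik n m x q"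
    using continuous_attains_sup[of "cball p0 r"] r by fastforce
  have "dist p0 q \<noteq> r"
    using pl_loglik_lt_on_sphere[OF n m Tp C r M grad, of q] max[of p0] r by auto
  then have dq: "dist p0 q < r"
    using q by simp
  have "pl_loglik n m x p \<le> pl_loglik n m x q" if "dist p q < r - dist p0 q" for p
  proof -
    have "dist p0 p < r"
      using that dist_triangle[of p0 p q] dist_commute[of p q] by linarith
    then show ?thesis
      using max by simp
  qed
  moreover have "r - dist p0 q > 0"
    using dq by simp
  ultimately have "pl_grad_beta n m x q = 0" "pl_grad_B n m x q = 0"
    using pl_grad_eq_0_of_local_max by blast+
  then show ?thesis
    using dq dist_commute by metis
qed

context ising_interaction
begin

lemma T_stat_nonneg: "T_stat A n x \<ge> 0"
  unfolding T_stat_def by (intro divide_nonneg_nonneg sum_nonneg) auto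

lemma T_stat_le:
  assumes x: "x \<in> configs n"
  shows "T_stat A n x \<le> 4 * \<gamma>^2"
proof -
  have "(\<Sum>i<n. (loc_field A n x i - loc_field_mean A n x)^2) \<le> (\<Sum>i<n. (2 * \<gamma>)^2)"
  proof (intro sum_mono)
    fix i assume "i \<in> {..<n}"
    then have "\<bar>loc_field A n x i - loc_field_mean A n x\<bar> \<le> 2 * \<gamma>"
      using abs_loc_field_le[OF x] abs_loc_field_mean_le[OF x] by (smt (verit) lessThan_iff)
    then show "(loc_field A n x i - loc_field_mean A n x)^2 \<le> (2 * \<gamma>)^2"
      using gamma_nonneg by (subst power2_le_iff_abs_le) auto
  qed
  then show ?thesis
    unfolding T_stat_def by (cases "n = 0") (simp_all add: divide_le_eq power_mult_distrib mult.commute)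
qed

lemma expect_pl_grad_sq_le:
  "ising_expect A n \<beta> B (\<lambda>x. (pl_grad_beta n (loc_field A n x) x (\<beta>, B))^2 + (pl_grad_B n (loc_field A n x) x (\<beta>, B))^2)
     \<le> (4 * \<gamma>^2 + 2 * \<gamma> * (2 + \<bar>\<beta>\<bar> * \<gamma>) * \<gamma> + (4 + 2 * \<bar>\<beta>\<bar> * \<gamma>)) * real n"
  unfolding pl_grad_beta_def pl_grad_B_def ising_expect_add
  using expect_loc_field_residual_sq_le expect_sum_residual_sq_le by (simp add: algebra_simps)

lemma ple_exists_near:
  fixes \<delta> K \<kappa> :: real
  defines "\<kappa> \<equiv> (1 - tanh ((\<beta> + 1) * \<gamma> + \<bar>B\<bar> + 1) ^ 2) / 2 * (min \<delta> 1 / (2 + 2 * \<gamma>^2))"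
  assumes n: "n > 0" and x: "x \<in> configs n" and \<beta>: "\<beta> > 0" and \<delta>: "\<delta> > 0" and T: "T_stat A n x > \<delta>"
    and grad: "(pl_grad_beta n (loc_field A n x) x (\<beta>, B))^2 + (pl_grad_B n (loc_field A n x) x (\<beta>, B))^2 < K * n"
    and K: "K > 0" and r1: "4 * K / (\<kappa>^2 * n) \<le> 1"
  shows "ple_exists A n x \<and> (fst (ple A n x) - \<beta>)^2 + (snd (ple A n x) - B)^2 < 4 * K / (\<kappa>^2 * n)"
proof -
  define m where "m = loc_field A n x"
  define M where "M = (\<bar>fst (\<beta>, B)\<bar> + 1) * \<gamma> + \<bar>snd (\<beta>, B)\<bar> + 1"
  define Tp where "Tp = min \<delta> 1"
  define r where "r = sqrt (4 * K / (\<kappa>^2 * n))"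
  have nr: "real n > 0"
    using n by simp
  have M_eq: "M = (\<beta> + 1) * \<gamma> + \<bar>B\<bar> + 1"
    unfolding M_def using \<beta> by simp
  have "\<bar>tanh M\<bar> < 1"
    using tanh_real_bounds[of M] by auto
  then have "\<kappa> > 0"
    unfolding \<kappa>_def M_eq[symmetric] using \<delta> gamma_nonneg
    by (intro mult_pos_pos divide_pos_pos) (auto simp: abs_square_less_1 add_pos_nonneg)
  then have r_sq: "4 * K / (\<kappa>^2 * n) > 0"
    using K nr by simp
  then have r: "0 < r" "r \<le> 1"
    unfolding r_def using r1 by auto
  have Tp: "0 < Tp" "Tp \<le> 1" "Tp \<le> (\<Sum>i<n. (m i - (\<Sum>j<n. m j) / n)^2) / n"
    unfolding Tp_def m_def using \<delta> T by (auto simp: T_stat_def loc_field_mean_def)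
  have C: "((\<Sum>j<n. m j) / n)^2 \<le> \<gamma>^2"
    using abs_loc_field_mean_le[OF x] gamma_nonneg unfolding m_def loc_field_mean_def
    by (subst power2_le_iff_abs_le) auto
  have "norm (pl_grad_beta n m x (\<beta>, B), pl_grad_B n m x (\<beta>, B)) < sqrt (K * n)"
    using grad unfolding m_def by (simp add: norm_Pair real_sqrt_less_mono)
  also have "\<dots> \<le> sqrt (4 * K * n)"
    using K by simp
  also have "\<dots> = \<kappa> * n * r"
  proof (rule real_sqrt_unique)
    have "r^2 = 4 * K / (\<kappa>^2 * n)"
      unfolding r_def using r_sq by simp
    then show "(\<kappa> * n * r)^2 = 4 * K * n"
      using \<open>\<kappa> > 0\<close> nr by (simp add: power_mult_distrib field_simps power2_eq_square)
    show "0 \<le> \<kappa> * n * r"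
      using \<open>\<kappa> > 0\<close> r by simp
  qed
  also have "\<kappa> * n * r = (1 - tanh M ^ 2) / 2 * (real n * Tp / (2 + 2 * \<gamma>^2)) * r"
    unfolding \<kappa>_def M_eq Tp_def by (simp add: algebra_simps)
  finally obtain q where q: "pl_grad_beta n m x q = 0" "pl_grad_B n m x q = 0" "dist q (\<beta>, B) < r"
    using pl_grad_root_near[OF n _ Tp C r M_def] abs_loc_field_le[OF x] unfolding m_def by blast
  have unique: "p = q" if "pl_root A n x p" for p
    using pl_grad_root_unique[OF n Tp C, of x p q] that q unfolding pl_root_iff_grad_eq_0 m_def by blast
  have root: "pl_root A n x q"
    using q unfolding pl_root_iff_grad_eq_0 m_def by simp
  have "ple_exists A n x" "ple A n x = q"
    unfolding ple_exists_def ple_def using root unique by blast+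
  moreover have "sqrt ((fst q - \<beta>)^2 + (snd q - B)^2) < r"
    using q(3) by (cases q) (simp add: dist_Pair_Pair dist_real_def)
  then have "(fst q - \<beta>)^2 + (snd q - B)^2 < r^2"
    using power_strict_mono[of _ r 2] by fastforce
  ultimately show ?thesis
    unfolding r_def using r_sq by simp
qed

end

section \<open>Asymptotics\<close>

lemma liminf_pos_imp_eventually_ge:
  fixes f :: "nat \<Rightarrow> real"
  assumes "liminf (\<lambda>n. ereal (f n)) > 0"
  obtains v where "v > 0" "eventually (\<lambda>n. v \<le> f n) sequentially"
proof -
  obtain z where z: "0 < ereal z" "ereal z < liminf (\<lambda>n. ereal (f n))"
    using ereal_dense2[OF assms] by blast
  have "eventually (\<lambda>n. ereal z < ereal (f n)) sequentially"
    by (rule less_LiminfD[OF z(2)])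
  then have "eventually (\<lambda>n. z \<le> f n) sequentially"
    by (rule eventually_mono) simp
  with z(1) that show ?thesis
    by simp
qed

lemma exists_small_T_parameters:
  fixes a b g :: real
  assumes a: "a > 0" and b: "b > 0" and g: "g \<ge> 0"
  obtains \<delta> \<eta> where "\<delta> > 0" "\<eta> > 0" "2 * g * \<delta> + 2 * \<eta>^2 \<le> a"
    "4 * (\<delta> * (1 + 3 * g) + \<eta> + 2 * \<eta>^2) < b"
proof
  define \<delta> where "\<delta> = min (a / (4 * (g + 1))) (b / (16 * (1 + 3 * g)))"
  define \<eta> where "\<eta> = min 1 (min (a / 4) (b / 48))"
  show "\<delta> > 0" "\<eta> > 0"
    unfolding \<delta>_def \<eta>_def using a b g by simp_all
  have \<eta>: "\<eta> \<le> 1" "\<eta> \<le> a / 4" "\<eta> \<le> b / 48"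
    unfolding \<eta>_def by auto
  have \<eta>_sq: "\<eta>^2 \<le> \<eta>"
    using \<open>\<eta> > 0\<close> \<eta>(1) by (simp add: power2_eq_square mult_left_le_one_le)
  have "\<delta> \<le> a / (4 * (g + 1))" "\<delta> \<le> b / (16 * (1 + 3 * g))"
    unfolding \<delta>_def by auto
  then have "\<delta> * (4 * (g + 1)) \<le> a" "\<delta> * (16 * (1 + 3 * g)) \<le> b"
    using g by (simp_all add: le_divide_eq)
  then show "2 * g * \<delta> + 2 * \<eta>^2 \<le> a" "4 * (\<delta> * (1 + 3 * g) + \<eta> + 2 * \<eta>^2) < b"
    using \<eta> \<eta>_sq \<open>\<delta> > 0\<close> b g by (simp_all add: algebra_simps)
qed

text \<open>Second-moment bounds plus Markov: \<open>T\<^sub>n \<le> \<delta>\<close> would force the fluctuation terms \<open>D\<close> or \<open>F\<close>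
  to be large, which has vanishing probability under the mean-field condition.\<close>

lemma (in ising_interaction) prob_T_stat_le_le:
  assumes n: "n > 0" and \<beta>: "\<beta> > 0" and \<eta>: "\<eta> > 0"
    and small: "2 * \<gamma>^2 * \<beta>^2 * \<delta> + 2 * \<eta>^2 \<le> (\<bar>tanh B\<bar> / (2 * \<beta>))^2"
    and sep: "4 * (\<delta> * (1 + 3 * \<gamma>^2 * \<beta>^2) + \<eta> + 2 * \<eta>^2) < (\<bar>tanh B\<bar> / (2 * (1 + \<beta> * \<gamma>)))^2 * v0"
    and v0: "v0 \<le> (\<Sum>i<n. (row_sum A n i - row_sum_mean A n)^2) / real n"
  shows "ising_prob A n \<beta> B {x. T_stat A n x \<le> \<delta>}
    \<le> (4 + 2 * \<bar>\<beta>\<bar> * \<gamma>) / \<eta> * ((\<Sum>i<n. \<Sum>j<n. (A n i j)^2) / n)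
      + (4 * \<gamma>^2 + 2 * \<bar>\<beta>\<bar> * \<gamma>^3) / \<eta>^2 * (1 / n)"
proof -
  have nr: "real n > 0"
    using n by simp
  define D where "D x = (\<Sum>i<n. (\<Sum>j<n. A n i j * (x j - tanh (\<beta> * loc_field A n x j + B)))^2)" for x
  define F where "F x = (\<Sum>j<n. row_sum A n j * (x j - tanh (\<beta> * loc_field A n x j + B)))^2" for x
  have "configs n \<inter> {x. T_stat A n x \<le> \<delta>} \<subseteq> {x. \<eta> * real n \<le> D x} \<union> {x. (\<eta> * real n)^2 \<le> F x}"
  proof (rule subsetI, rule ccontr)
    fix x assume x: "x \<in> configs n \<inter> {x. T_stat A n x \<le> \<delta>}"
      and "x \<notin> {x. \<eta> * real n \<le> D x} \<union> {x. (\<eta> * real n)^2 \<le> F x}"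
    then have "(\<bar>tanh B\<bar> / (2 * (1 + \<beta> * \<gamma>)))^2 * ((\<Sum>i<n. (row_sum A n i - row_sum_mean A n)^2) / n)
        \<le> 4 * (\<delta> * (1 + 3 * \<gamma>^2 * \<beta>^2) + \<eta> + 2 * \<eta>^2)"
      unfolding D_def F_def by (intro row_sum_variance_le_of_small_T[OF n \<beta> _ _ _ small]) auto
    moreover have "(\<bar>tanh B\<bar> / (2 * (1 + \<beta> * \<gamma>)))^2 * v0
        \<le> (\<bar>tanh B\<bar> / (2 * (1 + \<beta> * \<gamma>)))^2 * ((\<Sum>i<n. (row_sum A n i - row_sum_mean A n)^2) / n)"
      using v0 by (intro mult_left_mono) auto
    ultimately show False
      using sep by linarith
  qed
  then have "ising_prob A n \<beta> B {x. T_stat A n x \<le> \<delta>}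
      \<le> ising_prob A n \<beta> B ({x. \<eta> * real n \<le> D x} \<union> {x. (\<eta> * real n)^2 \<le> F x})"
    by (rule ising_prob_mono)
  also have "\<dots> \<le> ising_prob A n \<beta> B {x. \<eta> * real n \<le> D x} + ising_prob A n \<beta> B {x. (\<eta> * real n)^2 \<le> F x}"
    by (rule ising_prob_Un_le)
  also have "\<dots> \<le> ising_expect A n \<beta> B D / (\<eta> * real n) + ising_expect A n \<beta> B F / (\<eta> * real n)^2"
    using nr \<eta> by (intro add_mono ising_prob_ge_le_expect) (auto simp: D_def F_def intro!: sum_nonneg)
  also have "\<dots> \<le> (4 + 2 * \<bar>\<beta>\<bar> * \<gamma>) * (\<Sum>i<n. \<Sum>j<n. (A n i j)^2) / (\<eta> * real n)
      + (4 * \<gamma>^2 + 2 * \<bar>\<beta>\<bar> * \<gamma>^3) * real n / (\<eta> * real n)^2"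
    using expect_smoothed_residual_sq_le expect_row_sum_residual_sq_le nr \<eta>
    unfolding D_def F_def by (intro add_mono divide_right_mono) auto
  also have "\<dots> = (4 + 2 * \<bar>\<beta>\<bar> * \<gamma>) / \<eta> * ((\<Sum>i<n. \<Sum>j<n. (A n i j)^2) / n)
      + (4 * \<gamma>^2 + 2 * \<bar>\<beta>\<bar> * \<gamma>^3) / \<eta>^2 * (1 / n)"
    using nr \<eta> by (simp add: field_simps power2_eq_square)
  finally show ?thesis .
qed

lemma prob_T_stat_le_eventually_small:
  fixes A :: matseq
  assumes IS: "\<And>n. ising_interaction A n \<gamma>" and \<beta>: "\<beta> > 0"
    and mean_field: "(\<lambda>n. (\<Sum>i<n. \<Sum>j<n. (A n i j)^2) / real n) \<longlonglongrightarrow> 0"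
    and v0: "eventually (\<lambda>n. v0 \<le> (\<Sum>i<n. (row_sum A n i - row_sum_mean A n)^2) / real n) sequentially"
    and \<eta>: "\<eta> > 0"
    and small: "2 * \<gamma>^2 * \<beta>^2 * \<delta> + 2 * \<eta>^2 \<le> (\<bar>tanh B\<bar> / (2 * \<beta>))^2"
    and sep: "4 * (\<delta> * (1 + 3 * \<gamma>^2 * \<beta>^2) + \<eta> + 2 * \<eta>^2) < (\<bar>tanh B\<bar> / (2 * (1 + \<beta> * \<gamma>)))^2 * v0"
    and \<epsilon>: "\<epsilon> > 0"
  shows "eventually (\<lambda>n. ising_prob A n \<beta> B {x. T_stat A n x \<le> \<delta>} \<le> \<epsilon>) sequentially"
proof -
  define c1 where "c1 = (4 + 2 * \<bar>\<beta>\<bar> * \<gamma>) / \<eta>"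
  define c2 where "c2 = (4 * \<gamma>^2 + 2 * \<bar>\<beta>\<bar> * \<gamma>^3) / \<eta>^2"
  have "(\<lambda>n. c1 * ((\<Sum>i<n. \<Sum>j<n. (A n i j)^2) / n) + c2 * (1 / real n)) \<longlonglongrightarrow> c1 * 0 + c2 * 0"
    by (intro tendsto_intros mean_field)
  then have "eventually (\<lambda>n. c1 * ((\<Sum>i<n. \<Sum>j<n. (A n i j)^2) / n) + c2 * (1 / real n) < \<epsilon>) sequentially"
    using \<epsilon> by (intro order_tendstoD(2)) auto
  then show ?thesis
    using v0 eventually_gt_at_top[of 0]
  proof eventually_elim
    case (elim n)
    interpret ising_interaction A n \<beta> B \<gamma>
      by (rule IS)
    show ?case
      using prob_T_stat_le_le[OF _ \<beta> \<eta> small sep] elim unfolding c1_def c2_def by simp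
  qed
qed

definition ple_fails_or_far :: "matseq \<Rightarrow> nat \<Rightarrow> real \<Rightarrow> real \<Rightarrow> real \<Rightarrow> (nat \<Rightarrow> real) set" where
  "ple_fails_or_far A n \<beta> B M = - {x. ple_exists A n x} \<union>
     {x. ple_exists A n x \<and> (fst (ple A n x) - \<beta>)^2 + (snd (ple A n x) - B)^2 > M * (1 / real n)}"

lemma (in ising_interaction) prob_ple_fails_or_far_le:
  fixes \<delta> K \<kappa> :: real
  defines "\<kappa> \<equiv> (1 - tanh ((\<beta> + 1) * \<gamma> + \<bar>B\<bar> + 1) ^ 2) / 2 * (min \<delta> 1 / (2 + 2 * \<gamma>^2))"
  assumes n: "n > 0" and \<beta>: "\<beta> > 0" and \<delta>: "\<delta> > 0" and K: "K > 0"
    and r1: "4 * K / \<kappa>^2 * (1 / real n) < 1"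
  shows "ising_prob A n \<beta> B (ple_fails_or_far A n \<beta> B (4 * K / \<kappa>^2))
    \<le> ising_prob A n \<beta> B {x. T_stat A n x \<le> \<delta>}
      + (4 * \<gamma>^2 + 2 * \<gamma> * (2 + \<bar>\<beta>\<bar> * \<gamma>) * \<gamma> + (4 + 2 * \<bar>\<beta>\<bar> * \<gamma>)) / K"
proof -
  have nr: "real n > 0"
    using n by simp
  define G where "G x = (pl_grad_beta n (loc_field A n x) x (\<beta>, B))^2 + (pl_grad_B n (loc_field A n x) x (\<beta>, B))^2" for x
  have "configs n \<inter> ple_fails_or_far A n \<beta> B (4 * K / \<kappa>^2) \<subseteq> {x. T_stat A n x \<le> \<delta>} \<union> {x. K * real n \<le> G x}"
  proof (rule subsetI, rule ccontr)
    fix x assume x: "x \<in> configs n \<inter> ple_fails_or_far A n \<beta> B (4 * K / \<kappa>^2)"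
      and "x \<notin> {x. T_stat A n x \<le> \<delta>} \<union> {x. K * real n \<le> G x}"
    then have "ple_exists A n x \<and> (fst (ple A n x) - \<beta>)^2 + (snd (ple A n x) - B)^2 < 4 * K / (\<kappa>^2 * n)"
      using r1 unfolding G_def \<kappa>_def by (intro ple_exists_near[OF n _ \<beta> \<delta> _ _ K]) auto
    then show False
      using x unfolding ple_fails_or_far_def by auto
  qed
  then have "ising_prob A n \<beta> B (ple_fails_or_far A n \<beta> B (4 * K / \<kappa>^2))
      \<le> ising_prob A n \<beta> B ({x. T_stat A n x \<le> \<delta>} \<union> {x. K * real n \<le> G x})"
    by (rule ising_prob_mono)
  also have "\<dots> \<le> ising_prob A n \<beta> B {x. T_stat A n x \<le> \<delta>} + ising_prob A n \<beta> B {x. K * real n \<le> G x}"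
    by (rule ising_prob_Un_le)
  also have "\<dots> \<le> ising_prob A n \<beta> B {x. T_stat A n x \<le> \<delta>} + ising_expect A n \<beta> B G / (K * real n)"
    using nr K by (intro add_left_mono ising_prob_ge_le_expect) (auto simp: G_def)
  also have "\<dots> \<le> ising_prob A n \<beta> B {x. T_stat A n x \<le> \<delta>}
      + (4 * \<gamma>^2 + 2 * \<gamma> * (2 + \<bar>\<beta>\<bar> * \<gamma>) * \<gamma> + (4 + 2 * \<bar>\<beta>\<bar> * \<gamma>)) * real n / (K * real n)"
    using expect_pl_grad_sq_le K nr unfolding G_def by (intro add_left_mono divide_right_mono) auto
  finally show ?thesis
    using nr by simp
qed

lemma prob_ple_fails_or_far_eventually_small:
  fixes A :: matseq
  assumes IS: "\<And>n. ising_interaction A n \<gamma>" and \<beta>: "\<beta> > 0" and \<delta>: "\<delta> > 0"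
    and small_T: "\<And>\<epsilon>. \<epsilon> > 0 \<Longrightarrow> eventually (\<lambda>n. ising_prob A n \<beta> B {x. T_stat A n x \<le> \<delta>} \<le> \<epsilon>) sequentially"
    and \<epsilon>: "\<epsilon> > 0"
  shows "\<exists>M. eventually (\<lambda>n. ising_prob A n \<beta> B (ple_fails_or_far A n \<beta> B M) \<le> \<epsilon>) sequentially"
proof -
  define CG where "CG = 4 * \<gamma>^2 + 2 * \<gamma> * (2 + \<bar>\<beta>\<bar> * \<gamma>) * \<gamma> + (4 + 2 * \<bar>\<beta>\<bar> * \<gamma>)"
  have "CG \<ge> 0"
    unfolding CG_def using ising_interaction.gamma_nonneg[OF IS] by simp
  define K where "K = 2 * CG / \<epsilon> + 1"
  have K: "K > 0" "CG / K \<le> \<epsilon> / 2"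
    unfolding K_def using \<open>CG \<ge> 0\<close> \<epsilon> by (auto simp: field_simps add_nonneg_pos)
  define \<kappa> where "\<kappa> = (1 - tanh ((\<beta> + 1) * \<gamma> + \<bar>B\<bar> + 1) ^ 2) / 2 * (min \<delta> 1 / (2 + 2 * \<gamma>^2))"
  have "(\<lambda>n. 4 * K / \<kappa>^2 * (1 / real n)) \<longlonglongrightarrow> 4 * K / \<kappa>^2 * 0"
    by (intro tendsto_intros)
  then have "eventually (\<lambda>n. 4 * K / \<kappa>^2 * (1 / real n) < 1) sequentially"
    by (intro order_tendstoD(2)) auto
  moreover have "eventually (\<lambda>n. ising_prob A n \<beta> B {x. T_stat A n x \<le> \<delta>} \<le> \<epsilon> / 2) sequentially"
    using small_T[of "\<epsilon> / 2"] \<epsilon> by simp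
  ultimately have "eventually (\<lambda>n. ising_prob A n \<beta> B (ple_fails_or_far A n \<beta> B (4 * K / \<kappa>^2)) \<le> \<epsilon>) sequentially"
    using eventually_gt_at_top[of 0]
  proof eventually_elim
    case (elim n)
    interpret ising_interaction A n \<beta> B \<gamma>
      by (rule IS)
    show ?case
      using prob_ple_fails_or_far_le[OF elim(3) \<beta> \<delta> K(1) elim(1)[unfolded \<kappa>_def]] elim(2) K(2)
      unfolding \<kappa>_def CG_def by linarith
  qed
  then show ?thesis
    by blast
qed

lemma Op_T_stat_one:
  assumes IS: "\<And>n. ising_interaction A n \<gamma>"
  shows "Op A \<beta> B (\<lambda>n x. T_stat A n x) (\<lambda>n x. 1)"
  unfolding Op_def
proof (intro allI impI exI always_eventually)
  fix \<epsilon> :: real and n assume "\<epsilon> > 0"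
  interpret ising_interaction A n \<beta> B \<gamma>
    by (rule IS)
  have "configs n \<inter> {x. \<bar>T_stat A n x\<bar> > 4 * \<gamma>^2 * \<bar>1\<bar>} = {}"
    using T_stat_le T_stat_nonneg by fastforce
  then show "ising_prob A n \<beta> B {x. \<bar>T_stat A n x\<bar> > 4 * \<gamma>^2 * \<bar>1\<bar>} \<le> \<epsilon>"
    using \<open>\<epsilon> > 0\<close> by (simp add: ising_prob_empty)
qed

lemma Op_one_T_stat:
  assumes \<delta>: "\<delta> > 0"
    and small_T: "\<And>\<epsilon>. \<epsilon> > 0 \<Longrightarrow> eventually (\<lambda>n. ising_prob A n \<beta> B {x. T_stat A n x \<le> \<delta>} \<le> \<epsilon>) sequentially"
  shows "Op A \<beta> B (\<lambda>n x. 1) (\<lambda>n x. T_stat A n x)"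
  unfolding Op_def
proof (intro allI impI exI)
  fix \<epsilon> :: real assume "\<epsilon> > 0"
  show "eventually (\<lambda>n. ising_prob A n \<beta> B {x. \<bar>1::real\<bar> > 1 / \<delta> * \<bar>T_stat A n x\<bar>} \<le> \<epsilon>) sequentially"
    using small_T[OF \<open>\<epsilon> > 0\<close>]
  proof eventually_elim
    case (elim n)
    have "ising_prob A n \<beta> B {x. \<bar>1::real\<bar> > 1 / \<delta> * \<bar>T_stat A n x\<bar>} \<le> ising_prob A n \<beta> B {x. T_stat A n x \<le> \<delta>}"
      using \<delta> by (intro ising_prob_mono) (auto simp: field_simps)
    then show ?case
      using elim by simp
  qed
qed

lemma ising_prob_ple_exists_tendsto_1:
  assumes "\<And>\<epsilon>. \<epsilon> > 0 \<Longrightarrow> \<exists>M. eventually (\<lambda>n. ising_prob A n \<beta> B (ple_fails_or_far A n \<beta> B M) \<le> \<epsilon>) sequentially"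
  shows "(\<lambda>n. ising_prob A n \<beta> B {x. ple_exists A n x}) \<longlonglongrightarrow> 1"
proof (rule order_tendstoI)
  fix c :: real assume c: "c < 1"
  then obtain M where "eventually (\<lambda>n. ising_prob A n \<beta> B (ple_fails_or_far A n \<beta> B M) \<le> (1 - c) / 2) sequentially"
    using assms[of "(1 - c) / 2"] by auto
  then show "eventually (\<lambda>n. c < ising_prob A n \<beta> B {x. ple_exists A n x}) sequentially"
  proof eventually_elim
    case (elim n)
    have "ising_prob A n \<beta> B (- {x. ple_exists A n x}) \<le> ising_prob A n \<beta> B (ple_fails_or_far A n \<beta> B M)"
      unfolding ple_fails_or_far_def by (rule ising_prob_mono) auto
    moreover have "(1 - c) / 2 < 1 - c"
      using c by simp
    ultimately show ?case
      using elim ising_prob_add_compl[of A n \<beta> B "{x. ple_exists A n x}"] by linarith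
  qed
next
  fix c :: real assume "1 < c"
  then show "eventually (\<lambda>n. ising_prob A n \<beta> B {x. ple_exists A n x} < c) sequentially"
    using ising_prob_le_1 by (intro always_eventually) (metis le_less_trans)
qed

lemma prob_ple_far_eventually_small:
  assumes "\<And>\<epsilon>. \<epsilon> > 0 \<Longrightarrow> \<exists>M. eventually (\<lambda>n. ising_prob A n \<beta> B (ple_fails_or_far A n \<beta> B M) \<le> \<epsilon>) sequentially"
  shows "\<forall>\<epsilon>>0. \<exists>M. eventually (\<lambda>n. ising_prob A n \<beta> B
      {x. ple_exists A n x \<and> (fst (ple A n x) - \<beta>)^2 + (snd (ple A n x) - B)^2 > M * (1 / real n)} \<le> \<epsilon>)
      sequentially"
proof (intro allI impI)
  fix \<epsilon> :: real assume "\<epsilon> > 0"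
  then obtain M where "eventually (\<lambda>n. ising_prob A n \<beta> B (ple_fails_or_far A n \<beta> B M) \<le> \<epsilon>) sequentially"
    using assms by blast
  moreover have "ising_prob A n \<beta> B
      {x. ple_exists A n x \<and> (fst (ple A n x) - \<beta>)^2 + (snd (ple A n x) - B)^2 > M * (1 / real n)}
    \<le> ising_prob A n \<beta> B (ple_fails_or_far A n \<beta> B M)" for n
    unfolding ple_fails_or_far_def by (rule ising_prob_mono) auto
  ultimately show "\<exists>M. eventually (\<lambda>n. ising_prob A n \<beta> B
      {x. ple_exists A n x \<and> (fst (ple A n x) - \<beta>)^2 + (snd (ple A n x) - B)^2 > M * (1 / real n)} \<le> \<epsilon>)
      sequentially"
    by (blast intro: eventually_mono order_trans)
qed

lemma ising_interaction_uniform: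
  fixes A :: matseq
  assumes "\<And>n i j. i < n \<Longrightarrow> j < n \<Longrightarrow> A n i j = A n j i"
    and "\<And>n i j. i < n \<Longrightarrow> j < n \<Longrightarrow> A n i j \<ge> 0"
    and "\<And>n i. i < n \<Longrightarrow> A n i i = 0"
    and "\<exists>\<gamma>. \<forall>n i. i < n \<longrightarrow> row_sum A n i \<le> \<gamma>"
  obtains \<gamma> where "\<And>n. ising_interaction A n \<gamma>"
proof -
  obtain \<gamma> where "\<forall>n i. i < n \<longrightarrow> row_sum A n i \<le> \<gamma>"
    using assms(4) by blast
  then have "ising_interaction A n (max \<gamma> 0)" for n
    using assms(1-3) by unfold_locales (auto intro: max.coboundedI1)
  then show ?thesis
    using that by blast
qed

lemma T_stat_threshold:
  fixes A :: matseq
  assumes IS: "\<And>n. ising_interaction A n \<gamma>" and \<beta>: "\<beta> > 0" and B: "B \<noteq> 0"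
    and mean_field: "(\<lambda>n. (\<Sum>i<n. \<Sum>j<n. (A n i j)^2) / real n) \<longlonglongrightarrow> 0"
    and irregular: "liminf (\<lambda>n. ereal ((\<Sum>i<n. (row_sum A n i - row_sum_mean A n)^2) / real n)) > 0"
  obtains \<delta> where "\<delta> > 0"
    "\<And>\<epsilon>. \<epsilon> > 0 \<Longrightarrow> eventually (\<lambda>n. ising_prob A n \<beta> B {x. T_stat A n x \<le> \<delta>} \<le> \<epsilon>) sequentially"
proof -
  obtain v0 where v0: "v0 > 0"
    "eventually (\<lambda>n. v0 \<le> (\<Sum>i<n. (row_sum A n i - row_sum_mean A n)^2) / real n) sequentially"
    using liminf_pos_imp_eventually_ge[OF irregular] by blast
  have "\<bar>tanh B\<bar> > 0" and "1 + \<beta> * \<gamma> > 0"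
    using B \<beta> ising_interaction.gamma_nonneg[OF IS] by (auto simp: add_pos_nonneg)
  then obtain \<delta> \<eta> where \<delta>\<eta>: "\<delta> > 0" "\<eta> > 0"
    and "2 * (\<gamma>^2 * \<beta>^2) * \<delta> + 2 * \<eta>^2 \<le> (\<bar>tanh B\<bar> / (2 * \<beta>))^2"
    and "4 * (\<delta> * (1 + 3 * (\<gamma>^2 * \<beta>^2)) + \<eta> + 2 * \<eta>^2) < (\<bar>tanh B\<bar> / (2 * (1 + \<beta> * \<gamma>)))^2 * v0"
    using exists_small_T_parameters[of "(\<bar>tanh B\<bar> / (2 * \<beta>))^2" "(\<bar>tanh B\<bar> / (2 * (1 + \<beta> * \<gamma>)))^2 * v0"
        "\<gamma>^2 * \<beta>^2"] \<beta> v0(1) by auto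
  then have "eventually (\<lambda>n. ising_prob A n \<beta> B {x. T_stat A n x \<le> \<delta>} \<le> \<epsilon>) sequentially" if "\<epsilon> > 0" for \<epsilon>
    by (intro prob_T_stat_le_eventually_small[OF IS \<beta> mean_field v0(2) \<delta>\<eta>(2) _ _ that]) (simp_all add: mult.assoc)
  with \<delta>\<eta>(1) that show ?thesis
    by blast
qed

theorem theorem2:
  fixes A :: matseq and \<beta> B :: real
  assumes symm: "\<And>n i j. i < n \<Longrightarrow> j < n \<Longrightarrow> A n i j = A n j i"
    and nonneg: "\<And>n i j. i < n \<Longrightarrow> j < n \<Longrightarrow> A n i j \<ge> 0"
    and diag: "\<And>n i. i < n \<Longrightarrow> A n i i = 0"
    and C1: "\<exists>\<gamma>. \<forall>n i. i < n \<longrightarrow> row_sum A n i \<le> \<gamma>"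
    and mean_field: "(\<lambda>n. (\<Sum>i<n. \<Sum>j<n. (A n i j)^2) / real n) \<longlonglongrightarrow> 0"
    and irregular: "liminf (\<lambda>n. ereal ((\<Sum>i<n. (row_sum A n i - row_sum_mean A n)^2) / real n)) > 0"
    and \<beta>_pos: "\<beta> > 0" and B_nz: "B \<noteq> 0"
  shows "Thetap A \<beta> B (\<lambda>n x. T_stat A n x) (\<lambda>n x. 1)
       \<and> (\<lambda>n. ising_prob A n \<beta> B {x. ple_exists A n x}) \<longlonglongrightarrow> 1
       \<and> (\<forall>\<epsilon>>0. \<exists>M. eventually (\<lambda>n. ising_prob A n \<beta> B
             {x. ple_exists A n x \<and>
                 (fst (ple A n x) - \<beta>)^2 + (snd (ple A n x) - B)^2 > M * (1 / real n)} \<le> \<epsilon>)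
           sequentially)"
proof -
  obtain \<gamma> where IS: "\<And>n. ising_interaction A n \<gamma>"
    using ising_interaction_uniform[OF symm nonneg diag C1] by blast
  obtain \<delta> where \<delta>: "\<delta> > 0"
    and small_T: "\<And>\<epsilon>. \<epsilon> > 0 \<Longrightarrow> eventually (\<lambda>n. ising_prob A n \<beta> B {x. T_stat A n x \<le> \<delta>} \<le> \<epsilon>) sequentially"
    using T_stat_threshold[OF IS \<beta>_pos B_nz mean_field irregular] by blast
  have bad: "\<exists>M. eventually (\<lambda>n. ising_prob A n \<beta> B (ple_fails_or_far A n \<beta> B M) \<le> \<epsilon>) sequentially"
    if "\<epsilon> > 0" for \<epsilon>
    by (rule prob_ple_fails_or_far_eventually_small[OF IS \<beta>_pos \<delta> small_T that])
  show ?thesis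
    unfolding Thetap_def
    using Op_T_stat_one[OF IS] Op_one_T_stat[OF \<delta> small_T] ising_prob_ple_exists_tendsto_1[OF bad]
      prob_ple_far_eventually_small[OF bad] by blast
qed

end
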